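(* Let $G$ be a reaction network with one-dimensional stoichiometric subspace and suppose $cap_{pos}(G)=2N+1$ with $0\le N<+\infty$. If for a rate-constant vector $\kappa^*$ and a total-constant vector $c^*$, $G$ has $2N+1$ positive steady states in $\mathcal P_{c^*}$, and $N+1$ of these are stable, then $\sum_{j\in\mathcal L}(\beta_{1j}-\alpha_{1j})\kappa^*_j\prod_{i\in\mathcal J}|A_i|^{\alpha_{ij}}\prod_{i\in\{1,\dots,s\}\setminus\mathcal J}B_i^{\alpha_{ij}}\prod_{k\in\mathcal H,\,k\ne\tau}\Big(\frac{B_k}{|A_k|}-\frac{A_k}{|A_k|}\frac{B_\tau}{A_\tau}\Big)^{\gamma_{kj}}>0$, where $A_i,B_i,\gamma_{kj},\mathcal J,\mathcal H,\tau,\mathcal L$ are computed from $c^*$.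
   Context: A reaction network $G$ has species $X_1,\dots,X_s$ and $m$ reactions $\sum_{i}\alpha_{ij}X_i\to\sum_i\beta_{ij}X_i$, $\alpha_{ij},\beta_{ij}\in\mathbb Z_{\ge0}$, $(\alpha_{1j},\dots,\alpha_{sj})\neq(\beta_{1j},\dots,\beta_{sj})$. $\mathcal N$ has entries $\beta_{ij}-\alpha_{ij}$, $S=\mathrm{im}\,\mathcal N$. For $\kappa\in\mathbb R^m_{>0}$, $f(\kappa;x)=\mathcal N(\kappa_1\prod_i x_i^{\alpha_{i1}},\dots,\kappa_m\prod_i x_i^{\alpha_{im}})^\top$. Since $S$ is one-dimensional, species are labelled so that $\beta_{11}-\alpha_{11}\ne0$; for $c\in\mathbb R^{s-1}$, $\mathcal P_c=\{x\in\mathbb R^s_{\ge0}:(\beta_{i1}-\alpha_{i1})x_1-(\beta_{11}-\alpha_{11})x_i=c_{i-1},\ i=2,\dots,s\}$. A steady state is $x\ge0$ with $f(\kappa;x)=0$; positive if $x>0$; nondegenerate if $\mathrm{Jac}_f(x)(S)=S$; stable if nondegenerate and all nonzero eigenvalues of $\mathrm{Jac}_f(x)$ have negative real parts. $cap_{pos}(G)$ is the maximal $N\in\mathbb Z_{\ge0}\cup\{+\infty\}$ such that for some $\kappa,c$, $G$ has $N$ positive steady states in $\mathcal P_c$. Notation for $c^*$: $A_1=1,B_1=0$, $A_i=\frac{\beta_{i1}-\alpha_{i1}}{\beta_{11}-\alpha_{11}}$, $B_i=-\frac{c^*_{i-1}}{\beta_{11}-\alpha_{11}}$ ($i\ge2$).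 $[i]=\{k:A_k\ne0,B_k/A_k=B_i/A_i\}$ if $A_i\ne0$, $[i]=\{k:A_k=0\}$ otherwise; species labelled so that $1,\dots,r$ represent the $r$ distinct classes. $\varphi_k=\min_j\sum_{i\in[k]}\alpha_{ij}$, $\gamma_{kj}=\sum_{i\in[k]}\alpha_{ij}-\varphi_k$. $\mathcal J=\{i:A_i\ne0\}$, $\mathcal H=\{k\in\{1,\dots,r\}\cap\mathcal J:\gamma_{k1},\dots,\gamma_{km}\text{ not all equal}\}$. Standing assumption: if for some rate constants $G$ has $N$ positive steady states in $\mathcal P_{c^*}$ with $0<N<\infty$, species are labelled so that $1\in\mathcal H$. $I_i=(-B_i/A_i,+\infty)$ if $A_i>0$, $(0,+\infty)$ if $A_i=0$, $(0,-B_i/A_i)$ if $A_i<0$; $I=\bigcap_{k\in\mathcal H}I_k$; $\tau\in\mathcal H$ has $A_\tau>0$ with $-B_\tau/A_\tau$ the left endpoint of $I$; $\mathcal L=\{j:\gamma_{\tau j}=0\}$. *)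

theory Defs
  imports "HOL-Analysis.Analysis" "HOL-Library.Extended_Nat"
begin

text \<open>A reaction network G with species X_1..X_s and reactions 1..m is given by the
 reactant coefficients alpha i j and product coefficients beta i j (i species, j reaction).
 Vectors in R^s are functions nat => real that vanish outside {1..s}.\<close>

definition stoich :: "(nat \<Rightarrow> nat \<Rightarrow> nat) \<Rightarrow> (nat \<Rightarrow> nat \<Rightarrow> nat) \<Rightarrow> nat \<Rightarrow> nat \<Rightarrow> real" where
  "stoich \<alpha> \<beta> i j = real (\<beta> i j) - real (\<alpha> i j)"

definition valid_network :: "nat \<Rightarrow> nat \<Rightarrow> (nat \<Rightarrow> nat \<Rightarrow> nat) \<Rightarrow> (nat \<Rightarrow> nat \<Rightarrow> nat) \<Rightarrow> bool" where
  "valid_network s m \<alpha> \<beta> \<longleftrightarrow> 1 \<le> s \<and> 1 \<le> m \<and> (\<forall>j\<in>{1..m}. \<exists>i\<in>{1..s}. \<alpha> i j \<noteq> \<beta> i j)"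

definition stoich_subspace :: "nat \<Rightarrow> nat \<Rightarrow> (nat \<Rightarrow> nat \<Rightarrow> nat) \<Rightarrow> (nat \<Rightarrow> nat \<Rightarrow> nat) \<Rightarrow> (nat \<Rightarrow> real) set" where
  "stoich_subspace s m \<alpha> \<beta> =
     {y. \<exists>t :: nat \<Rightarrow> real. y = (\<lambda>i. if i \<in> {1..s} then (\<Sum>j=1..m. stoich \<alpha> \<beta> i j * t j) else 0)}"

definition one_dim_S :: "nat \<Rightarrow> nat \<Rightarrow> (nat \<Rightarrow> nat \<Rightarrow> nat) \<Rightarrow> (nat \<Rightarrow> nat \<Rightarrow> nat) \<Rightarrow> bool" where
  "one_dim_S s m \<alpha> \<beta> \<longleftrightarrow>
     (\<exists>v. v \<noteq> (\<lambda>_. 0) \<and> stoich_subspace s m \<alpha> \<beta> = {y. \<exists>r::real. y = (\<lambda>i. r * v i)})"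

definition rate_fun :: "nat \<Rightarrow> nat \<Rightarrow> (nat \<Rightarrow> nat \<Rightarrow> nat) \<Rightarrow> (nat \<Rightarrow> nat \<Rightarrow> nat) \<Rightarrow> (nat \<Rightarrow> real) \<Rightarrow> (nat \<Rightarrow> real) \<Rightarrow> nat \<Rightarrow> real" where
  "rate_fun s m \<alpha> \<beta> \<kappa> x i = (\<Sum>j=1..m. stoich \<alpha> \<beta> i j * (\<kappa> j * (\<Prod>l=1..s. x l ^ \<alpha> l j)))"

definition jac :: "nat \<Rightarrow> nat \<Rightarrow> (nat \<Rightarrow> nat \<Rightarrow> nat) \<Rightarrow> (nat \<Rightarrow> nat \<Rightarrow> nat) \<Rightarrow> (nat \<Rightarrow> real) \<Rightarrow> (nat \<Rightarrow> real) \<Rightarrow> nat \<Rightarrow> nat \<Rightarrow> real" where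
  "jac s m \<alpha> \<beta> \<kappa> x i k = deriv (\<lambda>t. rate_fun s m \<alpha> \<beta> \<kappa> (x(k := t)) i) (x k)"

definition compat_class :: "nat \<Rightarrow> (nat \<Rightarrow> nat \<Rightarrow> nat) \<Rightarrow> (nat \<Rightarrow> nat \<Rightarrow> nat) \<Rightarrow> (nat \<Rightarrow> real) \<Rightarrow> (nat \<Rightarrow> real) set" where
  "compat_class s \<alpha> \<beta> c =
     {x. (\<forall>i. i \<notin> {1..s} \<longrightarrow> x i = 0) \<and> (\<forall>i\<in>{1..s}. 0 \<le> x i) \<and>
         (\<forall>i\<in>{2..s}. stoich \<alpha> \<beta> i 1 * x 1 - stoich \<alpha> \<beta> 1 1 * x i = c (i - 1))}"

definition pos_steady_states :: "nat \<Rightarrow> nat \<Rightarrow> (nat \<Rightarrow> nat \<Rightarrow> nat) \<Rightarrow> (nat \<Rightarrow> nat \<Rightarrow> nat) \<Rightarrow> (nat \<Rightarrow> real) \<Rightarrow> (nat \<Rightarrow> real) \<Rightarrow> (nat \<Rightarrow> real) set" where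
  "pos_steady_states s m \<alpha> \<beta> \<kappa> c =
     {x \<in> compat_class s \<alpha> \<beta> c. (\<forall>i\<in>{1..s}. 0 < x i) \<and> (\<forall>i\<in>{1..s}. rate_fun s m \<alpha> \<beta> \<kappa> x i = 0)}"

definition ecard :: "'a set \<Rightarrow> enat" where
  "ecard A = (if finite A then enat (card A) else \<infinity>)"

definition cap_pos :: "nat \<Rightarrow> nat \<Rightarrow> (nat \<Rightarrow> nat \<Rightarrow> nat) \<Rightarrow> (nat \<Rightarrow> nat \<Rightarrow> nat) \<Rightarrow> enat" where
  "cap_pos s m \<alpha> \<beta> =
     Sup {ecard (pos_steady_states s m \<alpha> \<beta> \<kappa> c) | \<kappa> c. \<forall>j\<in>{1..m}. 0 < \<kappa> j}"

definition nondegenerate :: "nat \<Rightarrow> nat \<Rightarrow> (nat \<Rightarrow> nat \<Rightarrow> nat) \<Rightarrow> (nat \<Rightarrow> nat \<Rightarrow> nat) \<Rightarrow> (nat \<Rightarrow> real) \<Rightarrow> (nat \<Rightarrow> real) \<Rightarrow> bool" where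
  "nondegenerate s m \<alpha> \<beta> \<kappa> x \<longleftrightarrow>
     (\<lambda>y. \<lambda>i. if i \<in> {1..s} then (\<Sum>k=1..s. jac s m \<alpha> \<beta> \<kappa> x i k * y k) else 0)
       ` stoich_subspace s m \<alpha> \<beta> = stoich_subspace s m \<alpha> \<beta>"

definition jac_eigenvalue :: "nat \<Rightarrow> nat \<Rightarrow> (nat \<Rightarrow> nat \<Rightarrow> nat) \<Rightarrow> (nat \<Rightarrow> nat \<Rightarrow> nat) \<Rightarrow> (nat \<Rightarrow> real) \<Rightarrow> (nat \<Rightarrow> real) \<Rightarrow> complex \<Rightarrow> bool" where
  "jac_eigenvalue s m \<alpha> \<beta> \<kappa> x \<mu> \<longleftrightarrow>
     (\<exists>v :: nat \<Rightarrow> complex. (\<exists>i\<in>{1..s}. v i \<noteq> 0) \<and>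
        (\<forall>i\<in>{1..s}. (\<Sum>k=1..s. complex_of_real (jac s m \<alpha> \<beta> \<kappa> x i k) * v k) = \<mu> * v i))"

definition stable :: "nat \<Rightarrow> nat \<Rightarrow> (nat \<Rightarrow> nat \<Rightarrow> nat) \<Rightarrow> (nat \<Rightarrow> nat \<Rightarrow> nat) \<Rightarrow> (nat \<Rightarrow> real) \<Rightarrow> (nat \<Rightarrow> real) \<Rightarrow> bool" where
  "stable s m \<alpha> \<beta> \<kappa> x \<longleftrightarrow> nondegenerate s m \<alpha> \<beta> \<kappa> x \<and>
     (\<forall>\<mu>. jac_eigenvalue s m \<alpha> \<beta> \<kappa> x \<mu> \<and> \<mu> \<noteq> 0 \<longrightarrow> Re \<mu> < 0)"

definition A_coef :: "(nat \<Rightarrow> nat \<Rightarrow> nat) \<Rightarrow> (nat \<Rightarrow> nat \<Rightarrow> nat) \<Rightarrow> nat \<Rightarrow> real" where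
  "A_coef \<alpha> \<beta> i = (if i = 1 then 1 else stoich \<alpha> \<beta> i 1 / stoich \<alpha> \<beta> 1 1)"

definition B_coef :: "(nat \<Rightarrow> nat \<Rightarrow> nat) \<Rightarrow> (nat \<Rightarrow> nat \<Rightarrow> nat) \<Rightarrow> (nat \<Rightarrow> real) \<Rightarrow> nat \<Rightarrow> real" where
  "B_coef \<alpha> \<beta> c i = (if i = 1 then 0 else - c (i - 1) / stoich \<alpha> \<beta> 1 1)"

definition species_class :: "nat \<Rightarrow> (nat \<Rightarrow> nat \<Rightarrow> nat) \<Rightarrow> (nat \<Rightarrow> nat \<Rightarrow> nat) \<Rightarrow> (nat \<Rightarrow> real) \<Rightarrow> nat \<Rightarrow> nat set" where
  "species_class s \<alpha> \<beta> c i =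
     (if A_coef \<alpha> \<beta> i \<noteq> 0
      then {k\<in>{1..s}. A_coef \<alpha> \<beta> k \<noteq> 0 \<and>
              B_coef \<alpha> \<beta> c k / A_coef \<alpha> \<beta> k = B_coef \<alpha> \<beta> c i / A_coef \<alpha> \<beta> i}
      else {k\<in>{1..s}. A_coef \<alpha> \<beta> k = 0})"

text \<open>R is a set of class representatives (the species 1..r of the paper).\<close>
definition class_reps :: "nat \<Rightarrow> (nat \<Rightarrow> nat \<Rightarrow> nat) \<Rightarrow> (nat \<Rightarrow> nat \<Rightarrow> nat) \<Rightarrow> (nat \<Rightarrow> real) \<Rightarrow> nat set \<Rightarrow> bool" where
  "class_reps s \<alpha> \<beta> c R \<longleftrightarrow> R \<subseteq> {1..s} \<and>
     (\<forall>i\<in>{1..s}. \<exists>!k. k \<in> R \<and> species_class s \<alpha> \<beta> c k = species_class s \<alpha> \<beta> c i)"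

definition phi :: "nat \<Rightarrow> nat \<Rightarrow> (nat \<Rightarrow> nat \<Rightarrow> nat) \<Rightarrow> (nat \<Rightarrow> nat \<Rightarrow> nat) \<Rightarrow> (nat \<Rightarrow> real) \<Rightarrow> nat \<Rightarrow> nat" where
  "phi s m \<alpha> \<beta> c k = Min ((\<lambda>j. \<Sum>i\<in>species_class s \<alpha> \<beta> c k. \<alpha> i j) ` {1..m})"

definition gamma :: "nat \<Rightarrow> nat \<Rightarrow> (nat \<Rightarrow> nat \<Rightarrow> nat) \<Rightarrow> (nat \<Rightarrow> nat \<Rightarrow> nat) \<Rightarrow> (nat \<Rightarrow> real) \<Rightarrow> nat \<Rightarrow> nat \<Rightarrow> nat" where
  "gamma s m \<alpha> \<beta> c k j = (\<Sum>i\<in>species_class s \<alpha> \<beta> c k. \<alpha> i j) - phi s m \<alpha> \<beta> c k"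

definition J_set :: "nat \<Rightarrow> (nat \<Rightarrow> nat \<Rightarrow> nat) \<Rightarrow> (nat \<Rightarrow> nat \<Rightarrow> nat) \<Rightarrow> nat set" where
  "J_set s \<alpha> \<beta> = {i\<in>{1..s}. A_coef \<alpha> \<beta> i \<noteq> 0}"

definition H_set :: "nat \<Rightarrow> nat \<Rightarrow> (nat \<Rightarrow> nat \<Rightarrow> nat) \<Rightarrow> (nat \<Rightarrow> nat \<Rightarrow> nat) \<Rightarrow> (nat \<Rightarrow> real) \<Rightarrow> nat set \<Rightarrow> nat set" where
  "H_set s m \<alpha> \<beta> c R = {k \<in> R \<inter> J_set s \<alpha> \<beta>.
      \<exists>j1\<in>{1..m}. \<exists>j2\<in>{1..m}. gamma s m \<alpha> \<beta> c k j1 \<noteq> gamma s m \<alpha> \<beta> c k j2}"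

definition I_int :: "(nat \<Rightarrow> nat \<Rightarrow> nat) \<Rightarrow> (nat \<Rightarrow> nat \<Rightarrow> nat) \<Rightarrow> (nat \<Rightarrow> real) \<Rightarrow> nat \<Rightarrow> real set" where
  "I_int \<alpha> \<beta> c i =
     (if A_coef \<alpha> \<beta> i > 0 then {- B_coef \<alpha> \<beta> c i / A_coef \<alpha> \<beta> i <..}
      else if A_coef \<alpha> \<beta> i = 0 then {0 <..}
      else {0 <..< - B_coef \<alpha> \<beta> c i / A_coef \<alpha> \<beta> i})"

definition I_set :: "nat \<Rightarrow> nat \<Rightarrow> (nat \<Rightarrow> nat \<Rightarrow> nat) \<Rightarrow> (nat \<Rightarrow> nat \<Rightarrow> nat) \<Rightarrow> (nat \<Rightarrow> real) \<Rightarrow> nat set \<Rightarrow> real set" where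
  "I_set s m \<alpha> \<beta> c R = (\<Inter>k\<in>H_set s m \<alpha> \<beta> c R. I_int \<alpha> \<beta> c k)"

definition L_set :: "nat \<Rightarrow> nat \<Rightarrow> (nat \<Rightarrow> nat \<Rightarrow> nat) \<Rightarrow> (nat \<Rightarrow> nat \<Rightarrow> nat) \<Rightarrow> (nat \<Rightarrow> real) \<Rightarrow> nat \<Rightarrow> nat set" where
  "L_set s m \<alpha> \<beta> c \<tau> = {j\<in>{1..m}. gamma s m \<alpha> \<beta> c \<tau> j = 0}"

end

theory Submission
  imports Defs
begin

text \<open>Along a compatibility class every coordinate is affine in the first one,
  x_i = A_i x_1 + B_i, so the positive steady states are the roots t of the reduced rate
  g(t) = f_1(x(t)) at which all coordinates are positive, and a stable steady state is a root
  with g' < 0. Suppose the sum were not positive. Moving the total constants of the classes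
  outside H only multiplies g by a positive factor near the stable roots, because \<gamma> is constant
  on these classes; increasing the rate constant of a reaction j in L with N_1j < 0 then makes
  the sum negative without destroying the N+1 sign changes from + to - at the stable roots.
  Since the species of the class of \<tau> vanish at p = -B_\<tau>/A_\<tau>, g(t) = (t - p)^\<phi>_\<tau> C(t) where C(p)
  is a positive multiple of the sum, so g < 0 just right of p. Hence g changes sign 2N+2 times on
  the feasible interval: 2N+2 positive steady states, contradicting cap_pos = 2N+1.\<close>

section \<open>Sign changes of real functions\<close>

lemma root_between_opposite_signs:
  fixes f :: "real \<Rightarrow> real"
  assumes cont: "\<And>x. isCont f x" and "a \<le> b" and sign: "f a * f b < 0"
  obtains x where "a < x" "x < b" "f x = 0"
proof -
  have "\<exists>x. a \<le> x \<and> x \<le> b \<and> f x = 0"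
  proof (cases "f a < 0")
    case True
    then have "0 < f b" using sign by (simp add: mult_less_0_iff)
    then show ?thesis using IVT[of f a 0 b] True \<open>a \<le> b\<close> cont by auto
  next
    case False
    then have "f b < 0" using sign by (simp add: mult_less_0_iff)
    then show ?thesis using IVT2[of f b 0 a] False \<open>a \<le> b\<close> cont by auto
  qed
  then obtain x where x: "a \<le> x" "x \<le> b" "f x = 0" by blast
  moreover have "x \<noteq> a" "x \<noteq> b" using x(3) sign by auto
  ultimately show ?thesis by (intro that) auto
qed

lemma roots_of_alternating_signs:
  fixes f :: "real \<Rightarrow> real" and Q :: "nat \<Rightarrow> real"
  assumes cont: "\<And>x. isCont f x"
    and incr: "\<And>i. i < n \<Longrightarrow> Q i < Q (Suc i)"
    and sign: "\<And>i. i < n \<Longrightarrow> f (Q i) * f (Q (Suc i)) < 0"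
  obtains Z where "finite Z" "card Z = n" "Z \<subseteq> {Q 0<..<Q n}" "\<And>z. z \<in> Z \<Longrightarrow> f z = 0"
proof -
  have "\<forall>i\<in>{..<n}. \<exists>x. Q i < x \<and> x < Q (Suc i) \<and> f x = 0"
  proof
    fix i assume "i \<in> {..<n}"
    then have "i < n" by simp
    from root_between_opposite_signs[OF cont less_imp_le[OF incr[OF this]] sign[OF this]]
    show "\<exists>x. Q i < x \<and> x < Q (Suc i) \<and> f x = 0" by blast
  qed
  from bchoice[OF this] obtain r
    where r: "\<forall>i\<in>{..<n}. Q i < r i \<and> r i < Q (Suc i) \<and> f (r i) = 0" by blast
  have "Q (min i n) \<le> Q (min (Suc i) n)" for i
    using incr[of i] by (cases "i < n") (auto simp: min_def)
  then have "incseq (\<lambda>i. Q (min i n))" by (rule incseq_SucI)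
  have Q_mono: "Q i \<le> Q j" if "i \<le> j" "j \<le> n" for i j
  proof -
    have "Q (min i n) \<le> Q (min j n)" using incseqD[OF \<open>incseq _\<close> \<open>i \<le> j\<close>] .
    with that show ?thesis by (simp add: min_absorb1)
  qed
  have "strict_mono_on {..<n} r"
  proof (rule strict_mono_onI)
    fix i j assume "i \<in> {..<n}" "j \<in> {..<n}" "i < j"
    then have "r i < Q (Suc i)" "Q (Suc i) \<le> Q j" "Q j < r j" using r Q_mono by auto
    then show "r i < r j" by linarith
  qed
  then have "inj_on r {..<n}" by (rule strict_mono_on_imp_inj_on)
  show ?thesis
  proof (rule that[of "r ` {..<n}"])
    show "card (r ` {..<n}) = n" by (simp add: card_image \<open>inj_on r {..<n}\<close>)
    show "r ` {..<n} \<subseteq> {Q 0<..<Q n}"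
    proof
      fix z assume "z \<in> r ` {..<n}"
      then obtain i where "i < n" "z = r i" by auto
      then show "z \<in> {Q 0<..<Q n}" using r Q_mono[of 0 i] Q_mono[of "Suc i" n] by force
    qed
  qed (use r in auto)
qed

text \<open>For sorted points s_0 < ... < s_(n-1) this is the chain
  b, s_0 - h, s_0 + h, s_1 - h, s_1 + h, ..., s_(n-1) + h.\<close>
definition chain_around :: "real \<Rightarrow> real \<Rightarrow> real list \<Rightarrow> nat \<Rightarrow> real" where
  "chain_around b h ss k =
    (if k = 0 then b else if odd k then ss ! (k div 2) - h else ss ! (k div 2 - 1) + h)"

lemma chain_around_sign:
  fixes f :: "real \<Rightarrow> real"
  assumes sign: "\<And>i. i < length ss \<Longrightarrow> 0 < f (ss ! i - h) \<and> f (ss ! i + h) < 0"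
    and "f b < 0" "k \<le> 2 * length ss"
  shows "(even k \<longrightarrow> f (chain_around b h ss k) < 0) \<and> (odd k \<longrightarrow> 0 < f (chain_around b h ss k))"
proof (cases "k = 0")
  case False
  show ?thesis
  proof (cases "odd k")
    case True
    then have "k div 2 < length ss" using \<open>k \<le> 2 * length ss\<close> by presburger
    then show ?thesis using sign True \<open>k \<noteq> 0\<close> by (simp add: chain_around_def)
  next
    case even: False
    then have "k div 2 - 1 < length ss" using \<open>k \<le> 2 * length ss\<close> \<open>k \<noteq> 0\<close> by presburger
    then show ?thesis using sign even \<open>k \<noteq> 0\<close> by (simp add: chain_around_def)
  qed
qed (use \<open>f b < 0\<close> in \<open>simp add: chain_around_def\<close>)

lemma chain_around_increasing:
  assumes "sorted_wrt (<) ss" "0 < h" "i < 2 * length ss" "b < ss ! 0 - h"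
    and gaps: "\<And>j. j < length ss \<Longrightarrow> 0 < j \<Longrightarrow> 2 * h < ss ! j - ss ! (j - 1)"
  shows "chain_around b h ss i < chain_around b h ss (Suc i)"
proof (cases "i = 0")
  case True
  then show ?thesis using \<open>b < ss ! 0 - h\<close> by (simp add: chain_around_def)
next
  case False
  show ?thesis
  proof (cases "odd i")
    case True
    then show ?thesis using \<open>0 < h\<close> \<open>i \<noteq> 0\<close> by (simp add: chain_around_def)
  next
    case False
    then obtain j where j: "i = 2 * j" "0 < j" "j < length ss"
      using \<open>i < 2 * length ss\<close> \<open>i \<noteq> 0\<close> by (auto elim!: evenE)
    then have "2 * h < ss ! j - ss ! (j - 1)" using gaps by blast
    then show ?thesis using j by (simp add: chain_around_def)
  qed
qed

lemma alternating_chain_around_points: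
  fixes f :: "real \<Rightarrow> real" and S :: "real set"
  assumes "finite S"
    and gaps: "\<And>\<sigma> \<sigma>'. \<sigma> \<in> S \<Longrightarrow> \<sigma>' \<in> S \<Longrightarrow> \<sigma> < \<sigma>' \<Longrightarrow> 2 * h < \<sigma>' - \<sigma>"
    and left: "\<And>\<sigma>. \<sigma> \<in> S \<Longrightarrow> b < \<sigma> - h" "f b < 0"
    and sign: "\<And>\<sigma>. \<sigma> \<in> S \<Longrightarrow> 0 < f (\<sigma> - h) \<and> f (\<sigma> + h) < 0"
    and "0 < h" "S \<noteq> {}"
  obtains Q where "Q 0 = b" "Q (2 * card S) - h \<in> S"
    "\<And>i. i < 2 * card S \<Longrightarrow> Q i < Q (Suc i)"
    "\<And>i. i < 2 * card S \<Longrightarrow> f (Q i) * f (Q (Suc i)) < 0"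
proof -
  obtain ss where ss: "sorted_wrt (<) ss" "set ss = S" "length ss = card S"
    using finite_set_strict_sorted[OF \<open>finite S\<close>] by blast
  have ss_in: "ss ! i \<in> S" if "i < length ss" for i using that ss(2) nth_mem by blast
  have "0 < length ss" using ss \<open>finite S\<close> \<open>S \<noteq> {}\<close> by auto
  have sign_Q: "(even k \<longrightarrow> f (chain_around b h ss k) < 0) \<and> (odd k \<longrightarrow> 0 < f (chain_around b h ss k))"
    if "k \<le> 2 * length ss" for k
    using chain_around_sign[OF sign[OF ss_in] \<open>f b < 0\<close> that] by blast
  show ?thesis
  proof (rule that[of "chain_around b h ss"])
    show "chain_around b h ss 0 = b" by (simp add: chain_around_def)
    show "chain_around b h ss (2 * card S) - h \<in> S"
      using ss_in \<open>0 < length ss\<close> ss(3) by (simp add: chain_around_def)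
  next
    fix i assume "i < 2 * card S"
    then show "f (chain_around b h ss i) * f (chain_around b h ss (Suc i)) < 0"
      using sign_Q[of i] sign_Q[of "Suc i"] ss(3)
      by (cases "even i") (auto simp: mult_neg_pos mult_pos_neg)
    have "ss ! (j - 1) < ss ! j" if "j < length ss" "0 < j" for j
      using sorted_wrt_nth_less[OF ss(1)] that by simp
    then show "chain_around b h ss i < chain_around b h ss (Suc i)"
      using \<open>i < 2 * card S\<close> ss(3) left(1)[OF ss_in[OF \<open>0 < length ss\<close>]] gaps ss_in
      by (intro chain_around_increasing[OF ss(1) \<open>0 < h\<close>]) auto
  qed
qed

lemma linear_pos_between:
  fixes a b u v t :: real
  assumes "0 < a * u + b" "0 < a * v + b" "u \<le> t" "t \<le> v"
  shows "0 < a * t + b"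
proof (cases "a \<ge> 0")
  case True
  then have "a * u \<le> a * t" using assms(3) by (rule mult_left_mono[rotated])
  then show ?thesis using assms(1) by linarith
next
  case False
  then have "a * v \<le> a * t" using assms(4) by (intro mult_left_mono_neg) auto
  then show ?thesis using assms(2) by linarith
qed

lemma sign_change_at_decreasing_root:
  fixes f :: "real \<Rightarrow> real"
  assumes "(f has_real_derivative \<mu>) (at x)" "\<mu> < 0" "f x = 0"
  shows "eventually (\<lambda>h. 0 < f (x - h) \<and> f (x + h) < 0) (at_right 0)"
proof -
  obtain d1 where "d1 > 0" "\<forall>h>0. h < d1 \<longrightarrow> f x < f (x - h)"
    using DERIV_neg_dec_left[OF assms(1,2)] by blast
  moreover obtain d2 where "d2 > 0" "\<forall>h>0. h < d2 \<longrightarrow> f (x + h) < f x"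
    using DERIV_neg_dec_right[OF assms(1,2)] by blast
  ultimately show ?thesis unfolding eventually_at_right_field
    using assms(3) by (intro exI[where x="min d1 d2"]) auto
qed

lemma eventually_less_at_right_0: "(0::real) < c \<Longrightarrow> eventually (\<lambda>h. h < c) (at_right 0)"
  using eventually_at_right_real[of 0 c] by (auto elim: eventually_mono)

lemma eventually_pos_around:
  fixes f :: "real \<Rightarrow> real"
  assumes "isCont f x" "0 < f x"
  shows "eventually (\<lambda>h. 0 < f (x - h) \<and> 0 < f (x + h)) (at_right 0)"
proof -
  have "((\<lambda>h. x - h) \<longlongrightarrow> x) (at_right 0)" "((\<lambda>h. x + h) \<longlongrightarrow> x) (at_right 0)"
    by (auto intro!: tendsto_eq_intros)
  then show ?thesis
    using assms by (intro eventually_conj order_tendstoD(1)[OF isCont_tendsto_compose[OF assms(1)]])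
qed

lemma eventually_below_gaps:
  fixes S :: "real set" assumes "finite S"
  shows "eventually (\<lambda>h. \<forall>\<sigma>\<in>S. \<forall>\<sigma>'\<in>S. \<sigma> < \<sigma>' \<longrightarrow> 2 * h < \<sigma>' - \<sigma>) (at_right 0)"
proof (intro eventually_ball_finite[OF assms] ballI)
  fix \<sigma> \<sigma>' assume "\<sigma> \<in> S" "\<sigma>' \<in> S"
  show "eventually (\<lambda>h. \<sigma> < \<sigma>' \<longrightarrow> 2 * h < \<sigma>' - \<sigma>) (at_right 0)"
  proof (cases "\<sigma> < \<sigma>'")
    case True
    then show ?thesis
      using eventually_less_at_right_0[of "(\<sigma>' - \<sigma>) / 2"] by (auto elim: eventually_mono)
  qed simp
qed

section \<open>Networks with one-dimensional stoichiometric subspace\<close>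

lemma sum_fun_upd_add:
  fixes a b \<kappa> :: "nat \<Rightarrow> real"
  assumes "finite S" "j0 \<in> S"
  shows "(\<Sum>j\<in>S. a j * ((\<kappa>(j0 := \<kappa> j0 + \<epsilon>)) j * b j))
    = (\<Sum>j\<in>S. a j * (\<kappa> j * b j)) + \<epsilon> * (a j0 * b j0)"
proof -
  have "(\<Sum>j\<in>S. a j * ((\<kappa>(j0 := \<kappa> j0 + \<epsilon>)) j * b j)) =
        (\<Sum>j\<in>S. a j * (\<kappa> j * b j) + (if j = j0 then \<epsilon> * (a j0 * b j0) else 0))"
    by (intro sum.cong refl) (auto simp: algebra_simps)
  also have "\<dots> = (\<Sum>j\<in>S. a j * (\<kappa> j * b j)) + \<epsilon> * (a j0 * b j0)"
    using assms by (simp add: sum.distrib)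
  finally show ?thesis .
qed

locale one_dim_network =
  fixes s m :: nat and \<alpha> \<beta> :: "nat \<Rightarrow> nat \<Rightarrow> nat"
  assumes valid: "valid_network s m \<alpha> \<beta>"
    and one_dim: "one_dim_S s m \<alpha> \<beta>"
    and species_1_changes: "\<beta> 1 1 \<noteq> \<alpha> 1 1"
begin

abbreviation "A \<equiv> A_coef \<alpha> \<beta>"
abbreviation "B c \<equiv> B_coef \<alpha> \<beta> c"
abbreviation "St \<equiv> stoich \<alpha> \<beta>"

lemma stoich_1_1_nonzero: "St 1 1 \<noteq> 0"
  using species_1_changes by (simp add: stoich_def)

lemma one_in_species: "1 \<in> {1..s}" and one_in_reactions: "1 \<in> {1..m}"
  using valid by (auto simp: valid_network_def)

lemma A_1 [simp]: "A 1 = 1" "A (Suc 0) = 1" and B_1 [simp]: "B c 1 = 0" "B c (Suc 0) = 0"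
  by (simp_all add: A_coef_def B_coef_def)

lemma reaction_vector_in_S:
  assumes "j \<in> {1..m}"
  shows "(\<lambda>i. if i \<in> {1..s} then St i j else 0) \<in> stoich_subspace s m \<alpha> \<beta>"
  unfolding stoich_subspace_def mem_Collect_eq
  by (rule exI[where x="\<lambda>l. if l = j then 1 else 0"])
    (use assms in \<open>simp add: if_distrib cong: if_cong\<close>)

lemma stoich_proportional:
  assumes i: "i \<in> {1..s}" and j: "j \<in> {1..m}"
  shows "St i j = A i * St 1 j"
proof -
  obtain v where S: "stoich_subspace s m \<alpha> \<beta> = {y. \<exists>r::real. y = (\<lambda>i. r * v i)}"
    using one_dim unfolding one_dim_S_def by blast
  have column: "\<exists>r. \<forall>i\<in>{1..s}. St i k = r * v i" if k: "k \<in> {1..m}" for k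
  proof -
    obtain r where r: "(\<lambda>i. if i \<in> {1..s} then St i k else 0) = (\<lambda>i. r * v i)"
      using reaction_vector_in_S[OF k] unfolding S by blast
    have "St i k = r * v i" if "i \<in> {1..s}" for i
      using fun_cong[OF r, of i] that by simp
    then show ?thesis by blast
  qed
  obtain r1 where r1: "\<forall>i\<in>{1..s}. St i 1 = r1 * v i" using column one_in_reactions by blast
  obtain rj where rj: "\<forall>i\<in>{1..s}. St i j = rj * v i" using column j by blast
  have "v 1 \<noteq> 0" "r1 \<noteq> 0" using r1 one_in_species stoich_1_1_nonzero by auto
  then show ?thesis
    using r1 rj i one_in_species by (cases "i = 1") (simp_all add: A_coef_def field_simps)
qed

lemma stoich_1_nonzero:
  assumes "j \<in> {1..m}" shows "St 1 j \<noteq> 0"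
proof -
  obtain i where i: "i \<in> {1..s}" "\<alpha> i j \<noteq> \<beta> i j"
    using valid assms unfolding valid_network_def by blast
  then have "St i j \<noteq> 0" by (simp add: stoich_def)
  then show ?thesis using stoich_proportional[OF i(1) assms] by auto
qed

lemma rate_fun_proportional:
  assumes "i \<in> {1..s}"
  shows "rate_fun s m \<alpha> \<beta> \<kappa> x i = A i * rate_fun s m \<alpha> \<beta> \<kappa> x 1"
  unfolding rate_fun_def sum_distrib_left
  by (rule sum.cong) (auto simp: stoich_proportional[OF assms])

lemma A_vector_in_S: "(\<lambda>i. if i \<in> {1..s} then A i else 0) \<in> stoich_subspace s m \<alpha> \<beta>"
  unfolding stoich_subspace_def mem_Collect_eq
proof (rule exI[where x="\<lambda>j. if j = 1 then 1 / St 1 1 else 0"], rule ext)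
  fix i
  have "St i 1 / St 1 1 = A i" if "i \<in> {1..s}"
    using stoich_proportional[OF that one_in_reactions] stoich_1_1_nonzero by simp
  then show "(if i \<in> {1..s} then A i else 0)
    = (if i \<in> {1..s} then \<Sum>j = 1..m. St i j * (if j = 1 then 1 / St 1 1 else 0) else 0)"
    using one_in_reactions by (simp add: if_distrib cong: if_cong)
qed

definition point :: "(nat \<Rightarrow> real) \<Rightarrow> real \<Rightarrow> nat \<Rightarrow> real" where
  "point c t = (\<lambda>i. if i \<in> {1..s} then A i * t + B c i else 0)"

definition rate_on_line :: "(nat \<Rightarrow> real) \<Rightarrow> (nat \<Rightarrow> real) \<Rightarrow> real \<Rightarrow> real" where
  "rate_on_line \<kappa> c t = rate_fun s m \<alpha> \<beta> \<kappa> (point c t) 1"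

lemma point_1 [simp]: "point c t 1 = t"
  using one_in_species by (simp add: point_def)

lemma compat_class_point:
  assumes "x \<in> compat_class s \<alpha> \<beta> c" shows "x = point c (x 1)"
proof
  fix i
  show "x i = point c (x 1) i"
  proof (cases "i \<in> {1..s} \<and> i \<noteq> 1")
    case True
    then have "St i 1 * x 1 - St 1 1 * x i = c (i - 1)" using assms by (simp add: compat_class_def)
    then show ?thesis using True stoich_1_1_nonzero
      by (simp add: point_def A_coef_def B_coef_def field_simps)
  qed (use assms one_in_species in \<open>auto simp: compat_class_def point_def\<close>)
qed

lemma point_pos_steady_state:
  assumes "x \<in> pos_steady_states s m \<alpha> \<beta> \<kappa> c" shows "point c (x 1) = x"
  using assms compat_class_point[of x c, symmetric] by (simp add: pos_steady_states_def)

lemma inj_on_first_coordinate: "inj_on (\<lambda>x. x 1) (pos_steady_states s m \<alpha> \<beta> \<kappa> c)"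
  by (rule inj_onI) (metis point_pos_steady_state)

lemma pos_steady_state_on_line:
  assumes "x \<in> pos_steady_states s m \<alpha> \<beta> \<kappa> c"
  shows "\<forall>i\<in>{1..s}. 0 < A i * x 1 + B c i" and "rate_on_line \<kappa> c (x 1) = 0"
proof -
  have x: "point c (x 1) = x" using point_pos_steady_state[OF assms] .
  show "\<forall>i\<in>{1..s}. 0 < A i * x 1 + B c i"
  proof
    fix i assume i: "i \<in> {1..s}"
    then have "0 < x i" using assms by (simp add: pos_steady_states_def)
    then show "0 < A i * x 1 + B c i" using fun_cong[OF x, of i] i by (simp add: point_def)
  qed
  show "rate_on_line \<kappa> c (x 1) = 0"
    unfolding rate_on_line_def x using assms one_in_species by (simp add: pos_steady_states_def)
qed

lemma point_in_pos_steady_states: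
  assumes pos: "\<forall>i\<in>{1..s}. 0 < A i * t + B c i" and root: "rate_on_line \<kappa> c t = 0"
  shows "point c t \<in> pos_steady_states s m \<alpha> \<beta> \<kappa> c"
proof -
  have "point c t \<in> compat_class s \<alpha> \<beta> c"
    unfolding compat_class_def
  proof (intro CollectI conjI ballI allI impI)
    fix i assume "i \<in> {2..s}"
    then show "St i 1 * point c t 1 - St 1 1 * point c t i = c (i - 1)"
      using stoich_1_1_nonzero by (simp add: point_def A_coef_def B_coef_def field_simps)
  qed (use pos in \<open>auto simp: point_def intro: less_imp_le\<close>)
  moreover have "\<forall>i\<in>{1..s}. 0 < point c t i" using pos by (simp add: point_def)
  moreover have "\<forall>i\<in>{1..s}. rate_fun s m \<alpha> \<beta> \<kappa> (point c t) i = 0"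
    using root rate_fun_proportional by (simp add: rate_on_line_def)
  ultimately show ?thesis unfolding pos_steady_states_def by blast
qed

lemma rate_on_line_eq:
  "rate_on_line \<kappa> c t = (\<Sum>j=1..m. St 1 j * (\<kappa> j * (\<Prod>l=1..s. (A l * t + B c l) ^ \<alpha> l j)))"
  unfolding rate_on_line_def rate_fun_def
  by (intro sum.cong refl arg_cong2[where f="(*)"] prod.cong) (auto simp: point_def)

lemma isCont_rate_on_line: "isCont (rate_on_line \<kappa> c) t"
  unfolding rate_on_line_eq[abs_def] by (intro continuous_intros)

lemma rate_on_line_increase_rate:
  assumes "j0 \<in> {1..m}"
  shows "rate_on_line (\<kappa>(j0 := \<kappa> j0 + \<epsilon>)) c t
    = rate_on_line \<kappa> c t + \<epsilon> * (St 1 j0 * (\<Prod>l=1..s. (A l * t + B c l) ^ \<alpha> l j0))"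
  unfolding rate_on_line_eq by (rule sum_fun_upd_add) (use assms in auto)

definition partial_rate :: "(nat \<Rightarrow> real) \<Rightarrow> (nat \<Rightarrow> real) \<Rightarrow> nat \<Rightarrow> real" where
  "partial_rate \<kappa> x k = (\<Sum>j=1..m. St 1 j * (\<kappa> j *
     (real (\<alpha> k j) * x k ^ (\<alpha> k j - 1) * (\<Prod>l\<in>{1..s}-{k}. x l ^ \<alpha> l j))))"

definition slope :: "(nat \<Rightarrow> real) \<Rightarrow> (nat \<Rightarrow> real) \<Rightarrow> real" where
  "slope \<kappa> x = (\<Sum>k=1..s. A k * partial_rate \<kappa> x k)"

lemma has_real_derivative_partial_rate:
  assumes k: "k \<in> {1..s}"
  shows "((\<lambda>u. rate_fun s m \<alpha> \<beta> \<kappa> (x(k:=u)) 1) has_real_derivative partial_rate \<kappa> x k) (at (x k))"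
proof -
  have "(\<Prod>l=1..s. (x(k:=u)) l ^ \<alpha> l j) = u ^ \<alpha> k j * (\<Prod>l\<in>{1..s}-{k}. x l ^ \<alpha> l j)" for u j
    by (subst prod.remove[OF _ k]) (auto intro!: prod.cong)
  then have "(\<lambda>u. rate_fun s m \<alpha> \<beta> \<kappa> (x(k:=u)) 1) =
     (\<lambda>u. \<Sum>j=1..m. St 1 j * (\<kappa> j * (u ^ \<alpha> k j * (\<Prod>l\<in>{1..s}-{k}. x l ^ \<alpha> l j))))"
    unfolding rate_fun_def by simp
  then show ?thesis unfolding partial_rate_def
    by (auto intro!: derivative_eq_intros sum.cong)
qed

lemma jac_eq_partial_rate:
  assumes i: "i \<in> {1..s}" and k: "k \<in> {1..s}"
  shows "jac s m \<alpha> \<beta> \<kappa> x i k = A i * partial_rate \<kappa> x k"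
proof -
  have "(\<lambda>u. rate_fun s m \<alpha> \<beta> \<kappa> (x(k:=u)) i) = (\<lambda>u. A i * rate_fun s m \<alpha> \<beta> \<kappa> (x(k:=u)) 1)"
    using rate_fun_proportional[OF i] by auto
  moreover have "((\<lambda>u. A i * rate_fun s m \<alpha> \<beta> \<kappa> (x(k:=u)) 1)
      has_real_derivative A i * partial_rate \<kappa> x k) (at (x k))"
    by (rule DERIV_cmult[OF has_real_derivative_partial_rate[OF k]])
  ultimately show ?thesis unfolding jac_def by (simp add: DERIV_imp_deriv)
qed

lemma rate_on_line_deriv:
  "(rate_on_line \<kappa> c has_real_derivative slope \<kappa> (point c t)) (at t)"
proof -
  let ?x = "point c t"
  have factor: "((\<lambda>u. \<Prod>l=1..s. (A l * u + B c l) ^ \<alpha> l j) has_real_derivative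
     (\<Sum>l=1..s. (real (\<alpha> l j) * (A l * t + B c l) ^ (\<alpha> l j - 1) * A l)
        * (\<Prod>y\<in>{1..s}-{l}. (A y * t + B c y) ^ \<alpha> y j))) (at t)" for j
    by (rule has_field_derivative_prod) (auto intro!: derivative_eq_intros)
  have "(rate_on_line \<kappa> c has_real_derivative (\<Sum>j=1..m. St 1 j * (\<kappa> j *
     (\<Sum>l=1..s. (real (\<alpha> l j) * (A l * t + B c l) ^ (\<alpha> l j - 1) * A l)
        * (\<Prod>y\<in>{1..s}-{l}. (A y * t + B c y) ^ \<alpha> y j))))) (at t)"
    unfolding rate_on_line_eq[abs_def] by (intro DERIV_sum DERIV_cmult factor)
  also have "(\<Sum>j=1..m. St 1 j * (\<kappa> j *
     (\<Sum>l=1..s. (real (\<alpha> l j) * (A l * t + B c l) ^ (\<alpha> l j - 1) * A l)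
        * (\<Prod>y\<in>{1..s}-{l}. (A y * t + B c y) ^ \<alpha> y j))))
    = (\<Sum>j=1..m. \<Sum>l=1..s. A l * (St 1 j * (\<kappa> j * (real (\<alpha> l j) * ?x l ^ (\<alpha> l j - 1)
        * (\<Prod>y\<in>{1..s}-{l}. ?x y ^ \<alpha> y j)))))"
    unfolding sum_distrib_left by (intro sum.cong refl) (auto simp: point_def intro!: prod.cong)
  also have "\<dots> = slope \<kappa> ?x"
    unfolding slope_def partial_rate_def sum_distrib_left by (rule sum.swap)
  finally show ?thesis .
qed

lemma jac_eigenvalue_slope: "jac_eigenvalue s m \<alpha> \<beta> \<kappa> x (complex_of_real (slope \<kappa> x))"
  unfolding jac_eigenvalue_def
proof (intro exI[where x="\<lambda>i. complex_of_real (A i)"] conjI ballI)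
  show "\<exists>i\<in>{1..s}. complex_of_real (A i) \<noteq> 0" by (intro bexI[OF _ one_in_species]) simp
next
  fix i assume i: "i \<in> {1..s}"
  have "(\<Sum>k=1..s. jac s m \<alpha> \<beta> \<kappa> x i k * A k) = A i * slope \<kappa> x"
    unfolding slope_def sum_distrib_left
    by (intro sum.cong refl) (simp add: jac_eq_partial_rate[OF i])
  then show "(\<Sum>k=1..s. complex_of_real (jac s m \<alpha> \<beta> \<kappa> x i k) * complex_of_real (A k))
    = complex_of_real (slope \<kappa> x) * complex_of_real (A i)"
    by (simp flip: of_real_mult of_real_sum add: mult.commute)
qed

text \<open>Row 1 of the Jacobian applied to y = r A gives r times the slope; since A lies in S and
  has first entry 1, surjectivity of the Jacobian on S forces the slope to be nonzero.\<close>
lemma nondegenerate_imp_slope_nonzero: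
  assumes "nondegenerate s m \<alpha> \<beta> \<kappa> x"
  shows "slope \<kappa> x \<noteq> 0"
proof -
  have "(\<lambda>i. if i \<in> {1..s} then A i else 0) \<in> (\<lambda>y. \<lambda>i. if i \<in> {1..s}
      then (\<Sum>k=1..s. jac s m \<alpha> \<beta> \<kappa> x i k * y k) else 0) ` stoich_subspace s m \<alpha> \<beta>"
    using A_vector_in_S assms by (simp add: nondegenerate_def)
  then obtain y where y: "y \<in> stoich_subspace s m \<alpha> \<beta>" and
    A_eq: "(\<lambda>i. if i \<in> {1..s} then A i else 0)
      = (\<lambda>i. if i \<in> {1..s} then (\<Sum>k=1..s. jac s m \<alpha> \<beta> \<kappa> x i k * y k) else 0)"
    by (auto simp: image_iff)
  from y obtain t where t: "y = (\<lambda>i. if i \<in> {1..s} then (\<Sum>j=1..m. St i j * t j) else 0)"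
    unfolding stoich_subspace_def by blast
  let ?r = "\<Sum>j=1..m. St 1 j * t j"
  have y_k: "y k = A k * ?r" if k: "k \<in> {1..s}" for k
  proof -
    have "y k = (\<Sum>j=1..m. St k j * t j)" using k t by simp
    also have "\<dots> = (\<Sum>j=1..m. A k * (St 1 j * t j))"
      by (intro sum.cong refl) (simp add: stoich_proportional[OF k])
    finally show ?thesis by (simp add: sum_distrib_left)
  qed
  have "1 = (\<Sum>k=1..s. jac s m \<alpha> \<beta> \<kappa> x 1 k * y k)"
    using fun_cong[OF A_eq, of 1] one_in_species by simp
  also have "\<dots> = (\<Sum>k=1..s. (A k * partial_rate \<kappa> x k) * ?r)"
  proof (intro sum.cong refl)
    fix k assume k: "k \<in> {1..s}"
    show "jac s m \<alpha> \<beta> \<kappa> x 1 k * y k = (A k * partial_rate \<kappa> x k) * ?r"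
      unfolding jac_eq_partial_rate[OF one_in_species k] y_k[OF k] by simp
  qed
  also have "\<dots> = slope \<kappa> x * ?r"
    unfolding slope_def sum_distrib_right ..
  finally show ?thesis by auto
qed

lemma stable_imp_slope_neg:
  assumes "stable s m \<alpha> \<beta> \<kappa> x" shows "slope \<kappa> x < 0"
  using assms jac_eigenvalue_slope nondegenerate_imp_slope_nonzero unfolding stable_def by force

lemma stable_steady_state_decreasing:
  assumes "x \<in> pos_steady_states s m \<alpha> \<beta> \<kappa> c" "stable s m \<alpha> \<beta> \<kappa> x"
  shows "\<exists>\<mu><0. (rate_on_line \<kappa> c has_real_derivative \<mu>) (at (x 1))"
proof -
  have "(rate_on_line \<kappa> c has_real_derivative slope \<kappa> x) (at (x 1))"
    using rate_on_line_deriv[of \<kappa> c "x 1"] unfolding point_pos_steady_state[OF assms(1)] .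
  then show ?thesis using stable_imp_slope_neg[OF assms(2)] by blast
qed

lemma eventually_rate_increase_preserves_sign:
  assumes "finite P" "j0 \<in> {1..m}" "\<forall>t\<in>P. rate_on_line \<kappa> c t \<noteq> 0"
  shows "eventually (\<lambda>\<epsilon>. \<forall>t\<in>P. 0 < rate_on_line (\<kappa>(j0 := \<kappa> j0 + \<epsilon>)) c t * rate_on_line \<kappa> c t)
    (at_right 0)"
proof (rule eventually_ball_finite[OF assms(1)], rule ballI)
  fix t assume "t \<in> P"
  let ?g = "rate_on_line \<kappa> c t" and ?M = "St 1 j0 * (\<Prod>l=1..s. (A l * t + B c l) ^ \<alpha> l j0)"
  have "((\<lambda>\<epsilon>. (?g + \<epsilon> * ?M) * ?g) \<longlongrightarrow> (?g + 0 * ?M) * ?g) (at_right 0)"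
    by (intro tendsto_intros)
  moreover have "0 < (?g + 0 * ?M) * ?g" using \<open>t \<in> P\<close> assms(3) by (auto simp: zero_less_mult_iff)
  ultimately show "eventually (\<lambda>\<epsilon>. 0 < rate_on_line (\<kappa>(j0 := \<kappa> j0 + \<epsilon>)) c t * ?g) (at_right 0)"
    unfolding rate_on_line_increase_rate[OF assms(2)] by (rule order_tendstoD(1))
qed

lemma rate_increase_keeps_sign_changes:
  assumes "finite S" "j0 \<in> {1..m}"
    and sign: "\<And>\<sigma>. \<sigma> \<in> S \<Longrightarrow> 0 < rate_on_line \<kappa> c (\<sigma> - h) \<and> rate_on_line \<kappa> c (\<sigma> + h) < 0"
  obtains \<epsilon> where "0 < \<epsilon>" "\<And>\<sigma>. \<sigma> \<in> S \<Longrightarrow> 0 < rate_on_line (\<kappa>(j0 := \<kappa> j0 + \<epsilon>)) c (\<sigma> - h)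
    \<and> rate_on_line (\<kappa>(j0 := \<kappa> j0 + \<epsilon>)) c (\<sigma> + h) < 0"
proof -
  let ?P = "(\<lambda>\<sigma>. \<sigma> - h) ` S \<union> (\<lambda>\<sigma>. \<sigma> + h) ` S"
  have "\<forall>t\<in>?P. rate_on_line \<kappa> c t \<noteq> 0" using sign by fastforce
  then have "eventually (\<lambda>\<epsilon>. 0 < \<epsilon> \<and> (\<forall>t\<in>?P. 0 < rate_on_line (\<kappa>(j0 := \<kappa> j0 + \<epsilon>)) c t
      * rate_on_line \<kappa> c t)) (at_right 0)"
    using assms(1,2)
    by (intro eventually_conj eventually_at_right_less eventually_rate_increase_preserves_sign) auto
  then obtain \<epsilon> where "0 < \<epsilon>"
    and \<epsilon>: "\<forall>t\<in>?P. 0 < rate_on_line (\<kappa>(j0 := \<kappa> j0 + \<epsilon>)) c t * rate_on_line \<kappa> c t"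
    using eventually_happens'[OF trivial_limit_at_right_real] by blast
  show ?thesis
  proof (rule that[OF \<open>0 < \<epsilon>\<close>])
    fix \<sigma> assume "\<sigma> \<in> S"
    then show "0 < rate_on_line (\<kappa>(j0 := \<kappa> j0 + \<epsilon>)) c (\<sigma> - h)
      \<and> rate_on_line (\<kappa>(j0 := \<kappa> j0 + \<epsilon>)) c (\<sigma> + h) < 0"
      using \<epsilon> sign[OF \<open>\<sigma> \<in> S\<close>] by (force simp: zero_less_mult_iff)
  qed
qed

lemma ecard_le_cap_pos:
  "\<forall>j\<in>{1..m}. 0 < \<kappa> j \<Longrightarrow> ecard (pos_steady_states s m \<alpha> \<beta> \<kappa> c) \<le> cap_pos s m \<alpha> \<beta>"
  unfolding cap_pos_def by (rule Sup_upper) blast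

text \<open>Every point between b and the last \<sigma> + h is feasible because the coordinates are affine
  in x_1.\<close>
lemma many_pos_steady_states:
  assumes "finite S" "S \<noteq> {}" "0 < h"
    and gaps: "\<And>\<sigma> \<sigma>'. \<sigma> \<in> S \<Longrightarrow> \<sigma>' \<in> S \<Longrightarrow> \<sigma> < \<sigma>' \<Longrightarrow> 2 * h < \<sigma>' - \<sigma>"
    and left: "\<And>\<sigma>. \<sigma> \<in> S \<Longrightarrow> b < \<sigma> - h" "rate_on_line \<kappa> c b < 0"
    and sign: "\<And>\<sigma>. \<sigma> \<in> S \<Longrightarrow> 0 < rate_on_line \<kappa> c (\<sigma> - h) \<and> rate_on_line \<kappa> c (\<sigma> + h) < 0"
    and feasible_b: "\<forall>i\<in>{1..s}. 0 < A i * b + B c i"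
    and feasible_S: "\<And>\<sigma>. \<sigma> \<in> S \<Longrightarrow> \<forall>i\<in>{1..s}. 0 < A i * (\<sigma> + h) + B c i"
  shows "enat (2 * card S) \<le> ecard (pos_steady_states s m \<alpha> \<beta> \<kappa> c)"
proof -
  obtain Q where Q: "Q 0 = b" "Q (2 * card S) - h \<in> S"
    "\<And>i. i < 2 * card S \<Longrightarrow> Q i < Q (Suc i)"
    "\<And>i. i < 2 * card S \<Longrightarrow> rate_on_line \<kappa> c (Q i) * rate_on_line \<kappa> c (Q (Suc i)) < 0"
    using alternating_chain_around_points[where f="rate_on_line \<kappa> c",
        OF \<open>finite S\<close> gaps left sign \<open>0 < h\<close> \<open>S \<noteq> {}\<close>] by blast
  obtain Z where Z: "finite Z" "card Z = 2 * card S" "Z \<subseteq> {Q 0<..<Q (2 * card S)}"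
    "\<And>z. z \<in> Z \<Longrightarrow> rate_on_line \<kappa> c z = 0"
    using roots_of_alternating_signs[where f="rate_on_line \<kappa> c" and Q=Q and n="2 * card S",
        OF isCont_rate_on_line Q(3,4)] by blast
  have sub: "point c ` Z \<subseteq> pos_steady_states s m \<alpha> \<beta> \<kappa> c"
  proof
    fix x assume "x \<in> point c ` Z"
    then obtain z where z: "z \<in> Z" "x = point c z" by blast
    let ?\<sigma> = "Q (2 * card S) - h"
    have "b < z" "z < ?\<sigma> + h" using Z(3) z(1) Q(1) by auto
    then have "\<forall>i\<in>{1..s}. 0 < A i * z + B c i"
      using feasible_b feasible_S[OF Q(2)] by (auto intro: linear_pos_between[of _ b _ "?\<sigma> + h"])
    then show "x \<in> pos_steady_states s m \<alpha> \<beta> \<kappa> c"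
      using point_in_pos_steady_states Z(4)[OF z(1)] z(2) by blast
  qed
  have "inj_on (point c) Z" by (rule inj_on_inverseI[where g="\<lambda>x. x 1"]) (simp only: point_1)
  then have card_Z: "card (point c ` Z) = 2 * card S" using Z(2) by (simp add: card_image)
  show ?thesis
  proof (cases "finite (pos_steady_states s m \<alpha> \<beta> \<kappa> c)")
    case True
    then have "2 * card S \<le> card (pos_steady_states s m \<alpha> \<beta> \<kappa> c)"
      using card_mono[OF True sub] card_Z by simp
    then show ?thesis using True by (simp add: ecard_def)
  qed (simp add: ecard_def)
qed

end

section \<open>Classes of species at a total constant\<close>

locale class_structure = one_dim_network s m \<alpha> \<beta> for s m \<alpha> \<beta> +
  fixes c :: "nat \<Rightarrow> real" and R :: "nat set" and \<tau> :: nat and t0 :: real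
  assumes reps: "class_reps s \<alpha> \<beta> c R"
    and one_in_H: "1 \<in> H_set s m \<alpha> \<beta> c R"
    and \<tau>_in_H: "\<tau> \<in> H_set s m \<alpha> \<beta> c R"
    and A_\<tau>_pos: "A_coef \<alpha> \<beta> \<tau> > 0"
    and \<tau>_endpoint: "- B_coef \<alpha> \<beta> c \<tau> / A_coef \<alpha> \<beta> \<tau> = Inf (I_set s m \<alpha> \<beta> c R)"
    and feasible_t0: "\<forall>i\<in>{1..s}. 0 < A_coef \<alpha> \<beta> i * t0 + B_coef \<alpha> \<beta> c i"
begin

abbreviation "J \<equiv> J_set s \<alpha> \<beta>"
abbreviation "H \<equiv> H_set s m \<alpha> \<beta> c R"
abbreviation "I \<equiv> I_set s m \<alpha> \<beta> c R"
abbreviation "L \<equiv> L_set s m \<alpha> \<beta> c \<tau>"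
abbreviation "cl \<equiv> species_class s \<alpha> \<beta> c"
abbreviation "\<gamma> \<equiv> gamma s m \<alpha> \<beta> c"
abbreviation "\<phi> \<equiv> phi s m \<alpha> \<beta> c"
abbreviation "Z \<equiv> cl \<tau>"

definition p :: real where "p = - B c \<tau> / A \<tau>"

definition rep :: "nat \<Rightarrow> nat" where "rep i = (THE k. k \<in> R \<and> cl k = cl i)"

lemma R_subset: "R \<subseteq> {1..s}" using reps by (simp add: class_reps_def)
lemma H_subset: "H \<subseteq> R \<inter> J" by (auto simp: H_set_def)
lemma J_subset: "J \<subseteq> {1..s}" by (auto simp: J_set_def)
lemma finite_R: "finite R" using R_subset finite_subset by blast
lemma finite_J: "finite J" using J_subset finite_subset by blast
lemma A_nonzero_J: "i \<in> J \<Longrightarrow> A i \<noteq> 0" by (simp add: J_set_def)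
lemma \<tau>_in_R: "\<tau> \<in> R" and \<tau>_in_J: "\<tau> \<in> J" using \<tau>_in_H H_subset by auto
lemma \<tau>_in_species: "\<tau> \<in> {1..s}" using \<tau>_in_R R_subset by auto

lemma rep_in_R: "i \<in> {1..s} \<Longrightarrow> rep i \<in> R" and cl_rep: "i \<in> {1..s} \<Longrightarrow> cl (rep i) = cl i"
proof -
  assume "i \<in> {1..s}"
  then have "\<exists>!k. k \<in> R \<and> cl k = cl i" using reps by (simp add: class_reps_def)
  then have "rep i \<in> R \<and> cl (rep i) = cl i" unfolding rep_def by (rule theI')
  then show "rep i \<in> R" "cl (rep i) = cl i" by auto
qed

lemma rep_eqI: assumes "i \<in> {1..s}" "k \<in> R" "cl k = cl i" shows "rep i = k"
proof -
  have "\<exists>!k. k \<in> R \<and> cl k = cl i" using reps assms by (simp add: class_reps_def)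
  then show ?thesis unfolding rep_def using assms by (intro the1_equality) auto
qed

lemma rep_R: "k \<in> R \<Longrightarrow> rep k = k" using rep_eqI R_subset by auto

lemma cl_J: "k \<in> J \<Longrightarrow> cl k = {l\<in>{1..s}. A l \<noteq> 0 \<and> B c l / A l = B c k / A k}"
  by (simp add: species_class_def J_set_def)

lemma in_cl_self: "i \<in> J \<Longrightarrow> i \<in> cl i" by (auto simp: species_class_def J_set_def)

lemma rep_in_J: assumes "i \<in> J" shows "rep i \<in> J"
proof (rule ccontr)
  assume "rep i \<notin> J"
  have i: "i \<in> {1..s}" "A i \<noteq> 0" using assms by (auto simp: J_set_def)
  moreover have "rep i \<in> {1..s}" using rep_in_R[OF i(1)] R_subset by auto
  ultimately have "A (rep i) = 0" using \<open>rep i \<notin> J\<close> by (auto simp: J_set_def)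
  then have "cl (rep i) = {k\<in>{1..s}. A k = 0}" by (simp add: species_class_def)
  moreover have "i \<in> cl (rep i)" using cl_rep[OF i(1)] in_cl_self[OF assms] by simp
  ultimately show False using i by auto
qed

lemma B_eq_rep: assumes "i \<in> J" shows "B c i = A i * (B c (rep i) / A (rep i))"
proof -
  have "i \<in> cl (rep i)" using cl_rep in_cl_self[OF assms] assms J_subset by auto
  then have "B c i / A i = B c (rep i) / A (rep i)" using cl_J[OF rep_in_J[OF assms]] by auto
  then show ?thesis using A_nonzero_J[OF assms] by (simp add: field_simps)
qed

lemma cl_eq_J: "k \<in> J \<Longrightarrow> l \<in> J \<Longrightarrow> B c l / A l = B c k / A k \<Longrightarrow> cl l = cl k"
  by (simp add: cl_J)

text \<open>Both A_i t0 + B_i and A_k t0 + B_k are positive, and they are A_i and A_k times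
  the same number t0 + B_k / A_k.\<close>
lemma A_rep_same_sign: assumes "i \<in> J" shows "A i * A (rep i) > 0"
proof -
  let ?k = "rep i"
  have i: "i \<in> {1..s}" using assms J_subset by auto
  have k: "?k \<in> {1..s}" "A ?k \<noteq> 0" using rep_in_J[OF assms] J_subset A_nonzero_J by auto
  define b where "b = B c ?k / A ?k"
  have "0 < A i * t0 + B c i" using feasible_t0 i by auto
  then have "0 < A i * (t0 + b)" using B_eq_rep[OF assms] by (simp add: b_def algebra_simps)
  moreover have "0 < A ?k * t0 + B c ?k" using feasible_t0 k by auto
  then have "0 < A ?k * (t0 + b)" using k by (simp add: b_def distrib_left)
  ultimately show ?thesis by (auto simp: zero_less_mult_iff)
qed

lemma cl_eq_rep_preimage:
  assumes k: "k \<in> R \<inter> J" shows "cl k = {l\<in>{1..s}. l \<in> J \<and> rep l = k}"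
proof
  show "cl k \<subseteq> {l\<in>{1..s}. l \<in> J \<and> rep l = k}"
  proof
    fix l assume "l \<in> cl k"
    then have l: "l \<in> {1..s}" "l \<in> J" "B c l / A l = B c k / A k"
      using cl_J k by (auto simp: J_set_def)
    then have "rep l = k" using cl_eq_J[OF _ l(2,3)] rep_eqI[OF l(1)] k by auto
    then show "l \<in> {l\<in>{1..s}. l \<in> J \<and> rep l = k}" using l by auto
  qed
  show "{l\<in>{1..s}. l \<in> J \<and> rep l = k} \<subseteq> cl k"
    using cl_rep in_cl_self by auto
qed

lemma prod_over_classes:
  assumes Q: "Q \<subseteq> R \<inter> J"
  shows "(\<Prod>l\<in>{l\<in>{1..s}. l \<in> J \<and> rep l \<in> Q}. G (rep l) ^ \<alpha> l j) =
         (\<Prod>k\<in>Q. G k ^ (\<Sum>l\<in>cl k. \<alpha> l j))"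
proof -
  let ?S = "{l\<in>{1..s}. l \<in> J \<and> rep l \<in> Q}"
  have "finite Q" using Q finite_R finite_subset by auto
  then have "(\<Prod>l\<in>?S. G (rep l) ^ \<alpha> l j) = (\<Prod>k\<in>Q. \<Prod>l\<in>{x. x \<in> ?S \<and> rep x = k}. G (rep l) ^ \<alpha> l j)"
    by (intro prod.group[symmetric]) auto
  also have "\<dots> = (\<Prod>k\<in>Q. \<Prod>l\<in>cl k. G k ^ \<alpha> l j)"
  proof (rule prod.cong[OF refl])
    fix k assume "k \<in> Q"
    then have "k \<in> R \<inter> J" using Q by auto
    then have "{x. x \<in> ?S \<and> rep x = k} = cl k"
      unfolding cl_eq_rep_preimage[OF \<open>k \<in> R \<inter> J\<close>] using \<open>k \<in> Q\<close> by auto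
    then show "(\<Prod>l\<in>{x. x \<in> ?S \<and> rep x = k}. G (rep l) ^ \<alpha> l j) = (\<Prod>l\<in>cl k. G k ^ \<alpha> l j)"
      by (auto intro!: prod.cong)
  qed
  also have "\<dots> = (\<Prod>k\<in>Q. G k ^ (\<Sum>l\<in>cl k. \<alpha> l j))"
    by (simp add: power_sum)
  finally show ?thesis .
qed

lemma sum_alpha_cl: assumes "j \<in> {1..m}" shows "(\<Sum>l\<in>cl k. \<alpha> l j) = \<phi> k + \<gamma> k j"
proof -
  have "\<phi> k \<le> (\<Sum>l\<in>cl k. \<alpha> l j)" unfolding phi_def using assms by (intro Min_le) auto
  then show ?thesis by (simp add: gamma_def)
qed

lemma \<gamma>_const_not_H: assumes "k \<in> R \<inter> J - H" "j \<in> {1..m}" shows "\<gamma> k j = \<gamma> k 1"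
  using assms one_in_reactions unfolding H_set_def by blast

lemma Z_iff: "l \<in> J \<Longrightarrow> l \<in> Z \<longleftrightarrow> rep l = \<tau>"
  using cl_eq_rep_preimage[of \<tau>] \<tau>_in_R \<tau>_in_J J_subset by auto

lemma Z_subset_J: "Z \<subseteq> J" using cl_eq_rep_preimage[of \<tau>] \<tau>_in_R \<tau>_in_J by auto

lemma A_pos_Z: assumes "l \<in> Z" shows "A l > 0"
proof -
  have "l \<in> J" using Z_subset_J assms by auto
  then have "0 < A l * A \<tau>" using A_rep_same_sign Z_iff assms by force
  then show ?thesis using A_\<tau>_pos by (simp add: zero_less_mult_iff)
qed

lemma B_Z: assumes "l \<in> Z" shows "B c l = - A l * p"
proof -
  have "l \<in> J" using Z_subset_J assms by auto
  then show ?thesis using B_eq_rep Z_iff assms by (simp add: p_def)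
qed

lemma t0_in_I: "t0 \<in> I"
  unfolding I_set_def
proof
  fix k assume "k \<in> H"
  then have k: "k \<in> {1..s}" "A k \<noteq> 0" using H_subset J_subset A_nonzero_J by auto
  then have "0 < A k * t0 + B c k" using feasible_t0 by auto
  moreover have "0 < t0" using feasible_t0 one_in_species by force
  ultimately show "t0 \<in> I_int \<alpha> \<beta> c k" using k(2)
    by (cases "A k > 0") (auto simp: I_int_def field_simps)
qed

lemma feasible_imp_p_less: assumes "\<forall>i\<in>{1..s}. 0 < A i * t + B c i" shows "p < t"
proof -
  have "0 < A \<tau> * t + B c \<tau>" using assms \<tau>_in_species by blast
  then show ?thesis using A_\<tau>_pos by (simp add: p_def field_simps)
qed

text \<open>For k in H the left endpoint of I_k is at most Inf I = p, and it differs from p because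
  k and \<tau> are distinct class representatives.\<close>
lemma pos_at_p_H: assumes k: "k \<in> H - {\<tau>}" shows "A k * p + B c k > 0"
proof -
  have kJ: "k \<in> J" "k \<in> R" and ks: "k \<in> {1..s}" using k H_subset J_subset by auto
  show ?thesis
  proof (cases "A k > 0")
    case True
    have "- B c k / A k \<le> Inf I"
    proof (rule cInf_greatest)
      show "I \<noteq> {}" using t0_in_I by auto
      fix x assume "x \<in> I"
      then have "x \<in> I_int \<alpha> \<beta> c k" using k unfolding I_set_def by auto
      then show "- B c k / A k \<le> x" using True by (simp add: I_int_def)
    qed
    then have "- B c k / A k \<le> p" using \<tau>_endpoint by (simp add: p_def)
    moreover have "- B c k / A k \<noteq> p"
    proof
      assume "- B c k / A k = p"
      then have "cl k = cl \<tau>" using cl_eq_J[OF \<tau>_in_J kJ(1)] by (simp add: p_def)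
      then show False using rep_eqI[OF ks \<tau>_in_R] rep_R[OF kJ(2)] k by auto
    qed
    ultimately have "- B c k / A k < p" by simp
    then show ?thesis using True by (simp add: field_simps)
  next
    case False
    then have "A k < 0" using A_nonzero_J[OF kJ(1)] by simp
    moreover have "0 < A k * t0 + B c k" using feasible_t0 ks by auto
    moreover have "A k * t0 < A k * p"
      using mult_strict_left_mono_neg[OF feasible_imp_p_less[OF feasible_t0] \<open>A k < 0\<close>] .
    ultimately show ?thesis by linarith
  qed
qed

definition E :: "nat \<Rightarrow> real" where
  "E k = B c k / \<bar>A k\<bar> - A k / \<bar>A k\<bar> * (B c \<tau> / A \<tau>)"

lemma E_eq: "E k = (A k * p + B c k) / \<bar>A k\<bar>"
  by (simp add: E_def p_def add_divide_distrib diff_divide_distrib)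

lemma E_pos: "k \<in> H - {\<tau>} \<Longrightarrow> E k > 0"
  using E_eq pos_at_p_H H_subset A_nonzero_J by auto

lemma lin_at_p_H:
  assumes l: "l \<in> J" and "rep l \<in> H - {\<tau>}"
  shows "A l * p + B c l = \<bar>A l\<bar> * E (rep l)"
proof -
  let ?k = "rep l"
  have "A ?k \<noteq> 0" using rep_in_J[OF l] A_nonzero_J by blast
  then have "A l * p + B c l = A l / A ?k * (A ?k * p + B c ?k)"
    using B_eq_rep[OF l] by (simp add: field_simps)
  moreover have "A l / A ?k = \<bar>A l\<bar> / \<bar>A ?k\<bar>"
    using A_rep_same_sign[OF l] by (auto simp: zero_less_mult_iff)
  ultimately show ?thesis by (simp add: E_eq)
qed

section \<open>Moving the classes outside H\<close>

definition nonH_reps :: "nat set" where "nonH_reps = R \<inter> J - H"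

text \<open>The species of the classes outside H are moved to x_l = A_l (x_1 - p) + |A_l| K. As
  \<gamma> is constant on these classes, this multiplies the reduced rate by a positive factor, while
  these species stay positive for x_1 in (p - K, p + K).\<close>
definition moved :: "nat \<Rightarrow> bool" where "moved l \<longleftrightarrow> l \<in> J \<and> rep l \<notin> H"

definition moved_ratio :: "real \<Rightarrow> nat \<Rightarrow> real" where
  "moved_ratio K k = (if A k > 0 then K else - K) - p"

definition B_moved :: "real \<Rightarrow> nat \<Rightarrow> real" where
  "B_moved K l = (if moved l then A l * moved_ratio K (rep l) else B c l)"

definition c_moved :: "real \<Rightarrow> nat \<Rightarrow> real" where
  "c_moved K n = - St 1 1 * B_moved K (Suc n)"

definition lin :: "nat \<Rightarrow> real \<Rightarrow> real" where "lin l t = A l * t + B c l"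

definition lin_moved :: "real \<Rightarrow> nat \<Rightarrow> real \<Rightarrow> real" where
  "lin_moved K l t = A l * t + B_moved K l"

text \<open>B_1 = 0 whatever the total constants, so species 1 must stay in place; this is where
  1 \<in> H is used.\<close>
lemma not_moved_1: "\<not> moved 1"
  using rep_R one_in_H H_subset by (auto simp: moved_def)

lemma B_coef_c_moved: assumes "i \<in> {1..s}" shows "B_coef \<alpha> \<beta> (c_moved K) i = B_moved K i"
proof (cases "i = 1")
  case True
  then show ?thesis using not_moved_1 by (simp add: B_moved_def B_coef_def)
next
  case False
  then have "Suc (i - 1) = i" using assms by auto
  then show ?thesis using False stoich_1_1_nonzero by (simp add: B_coef_def c_moved_def)
qed

lemma rate_on_line_lin:
  "rate_on_line \<kappa> c t = (\<Sum>j=1..m. St 1 j * (\<kappa> j * (\<Prod>l=1..s. lin l t ^ \<alpha> l j)))"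
  unfolding rate_on_line_eq lin_def ..

lemma rate_on_line_c_moved:
  "rate_on_line \<kappa> (c_moved K) t = (\<Sum>j=1..m. St 1 j * (\<kappa> j * (\<Prod>l=1..s. lin_moved K l t ^ \<alpha> l j)))"
  unfolding rate_on_line_eq lin_moved_def
  by (intro sum.cong refl arg_cong2[where f="(*)"] prod.cong) (auto simp: B_coef_c_moved)

lemma moved_J: "moved l \<Longrightarrow> l \<in> J" by (simp add: moved_def)

lemma nonH_reps_subset: "nonH_reps \<subseteq> R \<inter> J" by (auto simp: nonH_reps_def)

lemma moved_iff_rep_nonH: "l \<in> {1..s} \<Longrightarrow> moved l \<longleftrightarrow> l \<in> J \<and> rep l \<in> nonH_reps"
  using rep_in_R rep_in_J by (auto simp: moved_def nonH_reps_def)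

lemma moved_nonH_reps: "k \<in> nonH_reps \<Longrightarrow> moved k"
  using rep_R by (auto simp: nonH_reps_def moved_def)

lemma lin_moved_not_moved: "\<not> moved l \<Longrightarrow> lin_moved K l t = lin l t"
  by (simp add: lin_moved_def lin_def B_moved_def)

lemma lin_moved_moved: assumes "moved l" shows "lin_moved K l t = A l * (t - p) + \<bar>A l\<bar> * K"
proof -
  have "A l * A (rep l) > 0" using A_rep_same_sign moved_J[OF assms] .
  then show ?thesis using assms
    by (cases "A l > 0")
      (auto simp: lin_moved_def B_moved_def moved_ratio_def algebra_simps zero_less_mult_iff)
qed

lemma not_moved_Z: "l \<in> Z \<Longrightarrow> \<not> moved l"
  using Z_iff Z_subset_J \<tau>_in_H by (auto simp: moved_def)

lemma lin_moved_Z: "l \<in> Z \<Longrightarrow> lin_moved K l t = A l * (t - p)"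
  using lin_moved_not_moved[OF not_moved_Z] B_Z by (simp add: lin_def algebra_simps)

lemma lin_moved_pos:
  assumes "moved l" "\<bar>t - p\<bar> < K" shows "lin_moved K l t > 0"
proof -
  have "A l \<noteq> 0" using A_nonzero_J moved_J[OF assms(1)] by blast
  then have "\<bar>A l\<bar> * \<bar>t - p\<bar> < \<bar>A l\<bar> * K" using assms(2) by simp
  moreover have "- (\<bar>A l\<bar> * \<bar>t - p\<bar>) \<le> A l * (t - p)"
    by (metis abs_ge_minus_self abs_mult minus_le_iff)
  ultimately show ?thesis using lin_moved_moved[OF assms(1), of K t] by linarith
qed

definition ratio :: "real \<Rightarrow> nat \<Rightarrow> real \<Rightarrow> real" where
  "ratio K k t = (t + moved_ratio K k) / (t + B c k / A k)"

lemma lin_moved_eq_ratio: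
  assumes "moved l" "lin l t \<noteq> 0" shows "lin_moved K l t = lin l t * ratio K (rep l) t"
proof -
  let ?b = "B c (rep l) / A (rep l)"
  have "lin l t = A l * (t + ?b)" using B_eq_rep[OF moved_J[OF assms(1)]]
    by (simp add: lin_def algebra_simps)
  moreover have "lin_moved K l t = A l * (t + moved_ratio K (rep l))"
    using assms(1) by (simp add: lin_moved_def B_moved_def algebra_simps)
  ultimately show ?thesis using assms(2) by (simp add: ratio_def)
qed

definition moved_factor :: "real \<Rightarrow> real \<Rightarrow> real" where
  "moved_factor K t = (\<Prod>k\<in>nonH_reps. ratio K k t ^ (\<phi> k + \<gamma> k 1))"

lemma prod_ratio_moved:
  assumes "j \<in> {1..m}"
  shows "(\<Prod>l=1..s. (if moved l then ratio K (rep l) t else 1) ^ \<alpha> l j) = moved_factor K t"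
proof -
  have "(\<Prod>l=1..s. (if moved l then ratio K (rep l) t else 1) ^ \<alpha> l j)
      = (\<Prod>l=1..s. if moved l then ratio K (rep l) t ^ \<alpha> l j else 1)"
    by (intro prod.cong refl) auto
  also have "\<dots> = (\<Prod>l\<in>{l\<in>{1..s}. moved l}. ratio K (rep l) t ^ \<alpha> l j)"
    by (rule prod.inter_filter[symmetric]) simp
  also have "{l\<in>{1..s}. moved l} = {l\<in>{1..s}. l \<in> J \<and> rep l \<in> nonH_reps}"
    using moved_iff_rep_nonH by auto
  also have "(\<Prod>l\<in>{l\<in>{1..s}. l \<in> J \<and> rep l \<in> nonH_reps}. ratio K (rep l) t ^ \<alpha> l j)
      = (\<Prod>k\<in>nonH_reps. ratio K k t ^ (\<Sum>l\<in>cl k. \<alpha> l j))"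
    by (rule prod_over_classes[OF nonH_reps_subset])
  also have "\<dots> = moved_factor K t"
    unfolding moved_factor_def
    using sum_alpha_cl[OF assms] \<gamma>_const_not_H[OF _ assms]
    by (intro prod.cong refl) (simp add: nonH_reps_def)
  finally show ?thesis .
qed

lemma prod_lin_moved:
  assumes nz: "\<forall>l\<in>{1..s}. lin l t \<noteq> 0" and j: "j \<in> {1..m}"
  shows "(\<Prod>l=1..s. lin_moved K l t ^ \<alpha> l j) = (\<Prod>l=1..s. lin l t ^ \<alpha> l j) * moved_factor K t"
proof -
  have "(\<Prod>l=1..s. lin_moved K l t ^ \<alpha> l j)
      = (\<Prod>l=1..s. (lin l t * (if moved l then ratio K (rep l) t else 1)) ^ \<alpha> l j)"
    by (intro prod.cong refl) (use nz lin_moved_eq_ratio lin_moved_not_moved in auto)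
  also have "\<dots> = (\<Prod>l=1..s. lin l t ^ \<alpha> l j)
      * (\<Prod>l=1..s. (if moved l then ratio K (rep l) t else 1) ^ \<alpha> l j)"
    by (simp add: power_mult_distrib prod.distrib)
  finally show ?thesis unfolding prod_ratio_moved[OF j] .
qed

lemma moved_factor_pos:
  assumes pos: "\<forall>l\<in>{1..s}. lin l t > 0 \<and> lin_moved K l t > 0"
  shows "moved_factor K t > 0"
  unfolding moved_factor_def
proof (rule prod_pos)
  fix k assume k: "k \<in> nonH_reps"
  have "k \<in> {1..s}" "rep k = k" using k nonH_reps_subset J_subset rep_R by auto
  then have "lin_moved K k t = lin k t * ratio K k t"
    using lin_moved_eq_ratio[OF moved_nonH_reps[OF k]] pos by force
  then have "ratio K k t > 0" using pos \<open>k \<in> {1..s}\<close> by (metis zero_less_mult_pos)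
  then show "0 < ratio K k t ^ (\<phi> k + \<gamma> k 1)" by simp
qed

lemma rate_on_line_c_moved_factor:
  assumes pos: "\<forall>l\<in>{1..s}. lin l t > 0 \<and> lin_moved K l t > 0"
  shows "rate_on_line \<kappa> (c_moved K) t = moved_factor K t * rate_on_line \<kappa> c t"
proof -
  have nz: "\<forall>l\<in>{1..s}. lin l t \<noteq> 0" using pos by auto
  show ?thesis unfolding rate_on_line_lin rate_on_line_c_moved sum_distrib_left
  proof (intro sum.cong refl)
    fix j assume j: "j \<in> {1..m}"
    show "St 1 j * (\<kappa> j * (\<Prod>l=1..s. lin_moved K l t ^ \<alpha> l j))
      = moved_factor K t * (St 1 j * (\<kappa> j * (\<Prod>l=1..s. lin l t ^ \<alpha> l j)))"
      unfolding prod_lin_moved[OF nz j] by (simp add: ac_simps)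
  qed
qed

section \<open>The reduced rate near the endpoint p\<close>

text \<open>The species of Z vanish at x_1 = p, so the reduced rate of the moved network factors as
  (x_1 - p)^\<phi>_\<tau> times a cofactor whose value at p only involves the reactions in L.\<close>
definition W :: "real \<Rightarrow> nat \<Rightarrow> real \<Rightarrow> real" where
  "W K j t = (\<Prod>l\<in>Z. A l ^ \<alpha> l j) * (\<Prod>l\<in>{1..s}-Z. lin_moved K l t ^ \<alpha> l j)"

definition cofactor :: "real \<Rightarrow> (nat \<Rightarrow> real) \<Rightarrow> real \<Rightarrow> real" where
  "cofactor K \<kappa> t = (\<Sum>j=1..m. St 1 j * (\<kappa> j * ((t - p) ^ \<gamma> \<tau> j * W K j t)))"

lemma prod_lin_moved_split_Z:
  assumes j: "j \<in> {1..m}"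
  shows "(\<Prod>l=1..s. lin_moved K l t ^ \<alpha> l j) = (t - p) ^ \<phi> \<tau> * ((t - p) ^ \<gamma> \<tau> j * W K j t)"
proof -
  have Z_subset: "Z \<subseteq> {1..s}" using Z_subset_J J_subset by auto
  have "(\<Prod>l=1..s. lin_moved K l t ^ \<alpha> l j)
      = (\<Prod>l\<in>{1..s}-Z. lin_moved K l t ^ \<alpha> l j) * (\<Prod>l\<in>Z. lin_moved K l t ^ \<alpha> l j)"
    by (rule prod.subset_diff[OF Z_subset]) simp
  moreover have "(\<Prod>l\<in>Z. lin_moved K l t ^ \<alpha> l j) = (\<Prod>l\<in>Z. A l ^ \<alpha> l j) * (t - p) ^ (\<Sum>l\<in>Z. \<alpha> l j)"
    by (simp add: lin_moved_Z power_mult_distrib prod.distrib power_sum)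
  ultimately show ?thesis by (simp add: sum_alpha_cl[OF j] W_def power_add ac_simps)
qed

lemma rate_on_line_cofactor: "rate_on_line \<kappa> (c_moved K) t = (t - p) ^ \<phi> \<tau> * cofactor K \<kappa> t"
  unfolding rate_on_line_c_moved cofactor_def sum_distrib_left
proof (intro sum.cong refl)
  fix j assume "j \<in> {1..m}"
  show "St 1 j * (\<kappa> j * (\<Prod>l=1..s. lin_moved K l t ^ \<alpha> l j))
    = (t - p) ^ \<phi> \<tau> * (St 1 j * (\<kappa> j * ((t - p) ^ \<gamma> \<tau> j * W K j t)))"
    unfolding prod_lin_moved_split_Z[OF \<open>j \<in> {1..m}\<close>] by (simp add: ac_simps)
qed

lemma isCont_cofactor: "isCont (cofactor K \<kappa>) t"
  unfolding cofactor_def W_def lin_moved_def by (intro continuous_intros)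

lemma cofactor_at_p: "cofactor K \<kappa> p = (\<Sum>j\<in>L. St 1 j * (\<kappa> j * W K j p))"
proof -
  have "cofactor K \<kappa> p = (\<Sum>j=1..m. if \<gamma> \<tau> j = 0 then St 1 j * (\<kappa> j * W K j p) else 0)"
    unfolding cofactor_def by (intro sum.cong refl) auto
  also have "\<dots> = (\<Sum>j\<in>{j\<in>{1..m}. \<gamma> \<tau> j = 0}. St 1 j * (\<kappa> j * W K j p))"
    by (rule sum.inter_filter[symmetric]) simp
  finally show ?thesis by (simp add: L_set_def)
qed

definition E_moved :: "real \<Rightarrow> nat \<Rightarrow> real" where
  "E_moved K k = (if k \<in> H then E k else K)"

lemma lin_moved_at_p:
  assumes l: "l \<in> {1..s}" "l \<notin> Z"
  shows "lin_moved K l p = (if l \<in> J then \<bar>A l\<bar> * E_moved K (rep l) else B c l)"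
proof (cases "l \<in> J")
  case False
  then show ?thesis using l by (simp add: lin_moved_def B_moved_def moved_def J_set_def)
next
  case True
  show ?thesis
  proof (cases "moved l")
    case True
    then show ?thesis using lin_moved_moved by (simp add: E_moved_def moved_def)
  next
    case False
    then have "rep l \<in> H - {\<tau>}" using \<open>l \<in> J\<close> Z_iff l(2) by (simp add: moved_def)
    then show ?thesis using lin_moved_not_moved[OF False] lin_at_p_H \<open>l \<in> J\<close>
      by (simp add: lin_def E_moved_def)
  qed
qed

definition weight :: "nat \<Rightarrow> real" where
  "weight j = (\<Prod>i\<in>J. \<bar>A i\<bar> ^ \<alpha> i j) * (\<Prod>i\<in>{1..s} - J. B c i ^ \<alpha> i j)
     * (\<Prod>k\<in>H - {\<tau>}. E k ^ \<gamma> k j)"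

definition moved_const :: "real \<Rightarrow> real" where
  "moved_const K = (\<Prod>k\<in>H - {\<tau>}. E k ^ \<phi> k) * (\<Prod>k\<in>nonH_reps. K ^ (\<phi> k + \<gamma> k 1))"

definition L_sum :: "(nat \<Rightarrow> real) \<Rightarrow> real" where
  "L_sum \<kappa> = (\<Sum>j\<in>L. St 1 j * (\<kappa> j * weight j))"

lemma prod_E_moved:
  assumes j: "j \<in> {1..m}"
  shows "(\<Prod>l\<in>J - Z. E_moved K (rep l) ^ \<alpha> l j) = moved_const K * (\<Prod>k\<in>H - {\<tau>}. E k ^ \<gamma> k j)"
proof -
  have "J - Z = {l\<in>{1..s}. l \<in> J \<and> rep l \<in> R \<inter> J - {\<tau>}}"
    using J_subset Z_iff rep_in_R rep_in_J by auto
  then have "(\<Prod>l\<in>J - Z. E_moved K (rep l) ^ \<alpha> l j)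
      = (\<Prod>k\<in>R \<inter> J - {\<tau>}. E_moved K k ^ (\<Sum>l\<in>cl k. \<alpha> l j))"
    by (simp only: prod_over_classes[OF Diff_subset])
  also have "\<dots> = (\<Prod>k\<in>R \<inter> J - {\<tau>}. E_moved K k ^ (\<phi> k + \<gamma> k j))"
    by (simp add: sum_alpha_cl[OF j])
  also have "R \<inter> J - {\<tau>} = (H - {\<tau>}) \<union> nonH_reps"
    using H_subset \<tau>_in_H by (auto simp: nonH_reps_def)
  also have "(\<Prod>k\<in>(H - {\<tau>}) \<union> nonH_reps. E_moved K k ^ (\<phi> k + \<gamma> k j))
      = (\<Prod>k\<in>H - {\<tau>}. E_moved K k ^ (\<phi> k + \<gamma> k j)) * (\<Prod>k\<in>nonH_reps. E_moved K k ^ (\<phi> k + \<gamma> k j))"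
    using finite_R H_subset nonH_reps_subset finite_subset
    by (intro prod.union_disjoint) (auto simp: nonH_reps_def)
  also have "(\<Prod>k\<in>H - {\<tau>}. E_moved K k ^ (\<phi> k + \<gamma> k j))
      = (\<Prod>k\<in>H - {\<tau>}. E k ^ \<phi> k) * (\<Prod>k\<in>H - {\<tau>}. E k ^ \<gamma> k j)"
    by (simp add: E_moved_def power_add prod.distrib)
  also have "(\<Prod>k\<in>nonH_reps. E_moved K k ^ (\<phi> k + \<gamma> k j)) = (\<Prod>k\<in>nonH_reps. K ^ (\<phi> k + \<gamma> k 1))"
    using \<gamma>_const_not_H[OF _ j] by (intro prod.cong refl) (auto simp: E_moved_def nonH_reps_def)
  finally show ?thesis by (simp add: moved_const_def ac_simps)
qed

lemma W_at_p: assumes j: "j \<in> {1..m}" shows "W K j p = moved_const K * weight j"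
proof -
  have Z_J: "Z \<subseteq> J" by (rule Z_subset_J)
  have "{1..s} - Z = (J - Z) \<union> ({1..s} - J)" using J_subset Z_J by auto
  then have "(\<Prod>l\<in>{1..s}-Z. lin_moved K l p ^ \<alpha> l j)
      = (\<Prod>l\<in>J-Z. lin_moved K l p ^ \<alpha> l j) * (\<Prod>l\<in>{1..s}-J. lin_moved K l p ^ \<alpha> l j)"
    using finite_J by (simp add: prod.union_disjoint Diff_Int_distrib2)
  also have "(\<Prod>l\<in>J-Z. lin_moved K l p ^ \<alpha> l j)
      = (\<Prod>l\<in>J-Z. \<bar>A l\<bar> ^ \<alpha> l j) * (\<Prod>l\<in>J-Z. E_moved K (rep l) ^ \<alpha> l j)"
    using lin_moved_at_p J_subset
    by (auto simp: power_mult_distrib prod.distrib[symmetric] intro!: prod.cong)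
  also have "(\<Prod>l\<in>{1..s}-J. lin_moved K l p ^ \<alpha> l j) = (\<Prod>l\<in>{1..s}-J. B c l ^ \<alpha> l j)"
  proof (intro prod.cong refl)
    fix l assume l: "l \<in> {1..s} - J"
    then have "l \<notin> Z" using Z_J by blast
    then show "lin_moved K l p ^ \<alpha> l j = B c l ^ \<alpha> l j" using lin_moved_at_p[of l K] l by simp
  qed
  also have "(\<Prod>l\<in>Z. A l ^ \<alpha> l j) = (\<Prod>l\<in>Z. \<bar>A l\<bar> ^ \<alpha> l j)"
    by (intro prod.cong refl) (simp add: A_pos_Z abs_of_pos)
  moreover have "(\<Prod>l\<in>J. \<bar>A l\<bar> ^ \<alpha> l j) = (\<Prod>l\<in>J-Z. \<bar>A l\<bar> ^ \<alpha> l j) * (\<Prod>l\<in>Z. \<bar>A l\<bar> ^ \<alpha> l j)"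
    using Z_J finite_J by (intro prod.subset_diff) auto
  ultimately show ?thesis
    unfolding W_def weight_def prod_E_moved[OF j] by (simp add: ac_simps)
qed

lemma cofactor_at_p_L_sum: "cofactor K \<kappa> p = moved_const K * L_sum \<kappa>"
  unfolding cofactor_at_p L_sum_def sum_distrib_left
  by (intro sum.cong refl) (auto simp: W_at_p L_set_def ac_simps)

lemma B_pos_not_J: assumes "l \<in> {1..s}" "l \<notin> J" shows "B c l > 0"
proof -
  have "0 < A l * t0 + B c l" using feasible_t0 assms(1) by blast
  moreover have "A l = 0" using assms by (simp add: J_set_def)
  ultimately show ?thesis by simp
qed

lemma lin_moved_at_p_pos:
  assumes K: "0 < K" and l: "l \<in> {1..s}" "l \<notin> Z" shows "lin_moved K l p > 0"
proof (cases "l \<in> J")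
  case True
  then have "rep l \<in> R \<inter> J - {\<tau>}" using rep_in_R[OF l(1)] rep_in_J Z_iff l by auto
  then have "E_moved K (rep l) > 0" using E_pos K by (auto simp: E_moved_def)
  then show ?thesis using lin_moved_at_p[OF l] True A_nonzero_J by simp
next
  case False
  then show ?thesis using lin_moved_at_p[OF l] B_pos_not_J l by simp
qed

lemma weight_pos: "weight j > 0"
  unfolding weight_def using A_nonzero_J B_pos_not_J E_pos
  by (intro mult_pos_pos prod_pos) auto

lemma moved_const_pos: "0 < K \<Longrightarrow> moved_const K > 0"
  unfolding moved_const_def using E_pos by (intro mult_pos_pos prod_pos) auto

lemma lin_moved_eq: "l \<in> {1..s} \<Longrightarrow> lin_moved K l t = A l * t + B_coef \<alpha> \<beta> (c_moved K) l"
  by (simp add: lin_moved_def B_coef_c_moved)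

lemma eventually_lin_pos_around:
  assumes feasible: "\<forall>i\<in>{1..s}. 0 < A i * \<sigma> + B c i" and "\<bar>\<sigma> - p\<bar> < K"
  shows "eventually (\<lambda>h. \<forall>l\<in>{1..s}. (0 < lin l (\<sigma> - h) \<and> 0 < lin l (\<sigma> + h))
    \<and> (0 < lin_moved K l (\<sigma> - h) \<and> 0 < lin_moved K l (\<sigma> + h))) (at_right 0)"
proof (rule eventually_ball_finite, simp, rule ballI)
  fix l assume l: "l \<in> {1..s}"
  have "0 < lin l \<sigma>" using feasible l by (simp add: lin_def)
  moreover have "0 < lin_moved K l \<sigma>"
    using lin_moved_pos[OF _ \<open>\<bar>\<sigma> - p\<bar> < K\<close>] lin_moved_not_moved \<open>0 < lin l \<sigma>\<close> by metis
  moreover have "isCont (lin l) \<sigma>" "isCont (lin_moved K l) \<sigma>"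
    unfolding lin_def lin_moved_def by (intro continuous_intros)+
  ultimately show "eventually (\<lambda>h. (0 < lin l (\<sigma> - h) \<and> 0 < lin l (\<sigma> + h))
    \<and> (0 < lin_moved K l (\<sigma> - h) \<and> 0 < lin_moved K l (\<sigma> + h))) (at_right 0)"
    by (intro eventually_conj eventually_pos_around)
qed

lemma eventually_moved_sign_change:
  assumes feasible: "\<forall>i\<in>{1..s}. 0 < A i * \<sigma> + B c i" and "\<bar>\<sigma> - p\<bar> < K"
    and root: "rate_on_line \<kappa> c \<sigma> = 0"
    and decr: "(rate_on_line \<kappa> c has_real_derivative \<mu>) (at \<sigma>)" "\<mu> < 0"
  shows "eventually (\<lambda>h. p < \<sigma> - h \<and> 0 < rate_on_line \<kappa> (c_moved K) (\<sigma> - h)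
    \<and> rate_on_line \<kappa> (c_moved K) (\<sigma> + h) < 0 \<and> (\<forall>l\<in>{1..s}. 0 < lin_moved K l (\<sigma> + h))) (at_right 0)"
proof -
  have "eventually (\<lambda>h. h < \<sigma> - p) (at_right 0)"
    using feasible_imp_p_less[OF feasible] by (intro eventually_less_at_right_0) simp
  moreover have "eventually (\<lambda>h. 0 < rate_on_line \<kappa> c (\<sigma> - h) \<and> rate_on_line \<kappa> c (\<sigma> + h) < 0)
      (at_right 0)"
    by (rule sign_change_at_decreasing_root[OF decr root])
  moreover note eventually_lin_pos_around[OF assms(1,2)]
  ultimately show ?thesis
  proof eventually_elim
    case (elim h)
    then have "0 < moved_factor K (\<sigma> - h)" "0 < moved_factor K (\<sigma> + h)"
      by (auto intro!: moved_factor_pos)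
    with elim show ?case
      by (simp add: rate_on_line_c_moved_factor mult_pos_neg)
  qed
qed

lemma eventually_moved_neg_right_of_p:
  assumes "0 < K" "L_sum \<kappa> < 0"
  shows "eventually (\<lambda>t. rate_on_line \<kappa> (c_moved K) t < 0 \<and> (\<forall>l\<in>{1..s}. 0 < lin_moved K l t))
    (at_right p)"
proof -
  have "cofactor K \<kappa> p < 0"
    using assms moved_const_pos by (simp add: cofactor_at_p_L_sum mult_pos_neg)
  then have "eventually (\<lambda>t. cofactor K \<kappa> t < 0) (at_right p)"
    by (rule order_tendstoD(2)[OF isCont_tendsto_compose[OF isCont_cofactor tendsto_ident_at]])
  moreover have "eventually (\<lambda>t. 0 < lin_moved K l t) (at_right p)" if l: "l \<in> {1..s}" for l
  proof (cases "l \<in> Z")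
    case True
    then show ?thesis
      using eventually_at_right_less[of p] A_pos_Z
      by (auto elim!: eventually_mono simp: lin_moved_Z)
  next
    case False
    have "isCont (lin_moved K l) p" unfolding lin_moved_def by (intro continuous_intros)
    then show ?thesis using lin_moved_at_p_pos[OF assms(1) l False]
      by (rule order_tendstoD(1)[OF isCont_tendsto_compose[OF _ tendsto_ident_at]])
  qed
  then have "eventually (\<lambda>t. \<forall>l\<in>{1..s}. 0 < lin_moved K l t) (at_right p)"
    by (intro eventually_ball_finite) auto
  moreover note eventually_at_right_less[of p]
  ultimately show ?thesis
    by eventually_elim (simp add: rate_on_line_cofactor mult_pos_neg)
qed

lemma L_nonempty: "L \<noteq> {}"
proof -
  have "\<phi> \<tau> \<in> (\<lambda>j. \<Sum>l\<in>cl \<tau>. \<alpha> l j) ` {1..m}"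
    unfolding phi_def using one_in_reactions by (intro Min_in) auto
  then obtain j where "j \<in> {1..m}" "(\<Sum>l\<in>cl \<tau>. \<alpha> l j) = \<phi> \<tau>" by auto
  then have "j \<in> L" by (simp add: L_set_def gamma_def)
  then show ?thesis by auto
qed

lemma neg_stoich_in_L:
  assumes "\<forall>j\<in>{1..m}. 0 < \<kappa> j" "L_sum \<kappa> \<le> 0"
  obtains j0 where "j0 \<in> L" "St 1 j0 < 0"
proof -
  have L_sub: "L \<subseteq> {1..m}" by (auto simp: L_set_def)
  have "\<exists>j\<in>L. St 1 j < 0"
  proof (rule ccontr)
    assume "\<not> (\<exists>j\<in>L. St 1 j < 0)"
    then have "\<forall>j\<in>L. 0 < St 1 j" using stoich_1_nonzero L_sub by force
    then have "0 < L_sum \<kappa>"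
      unfolding L_sum_def using assms(1) L_sub L_nonempty weight_pos
      by (intro sum_pos finite_subset[OF L_sub]) auto
    then show False using assms(2) by simp
  qed
  then show ?thesis using that by blast
qed

lemma L_sum_increase_rate:
  "j0 \<in> L \<Longrightarrow> L_sum (\<kappa>(j0 := \<kappa> j0 + \<epsilon>)) = L_sum \<kappa> + \<epsilon> * (St 1 j0 * weight j0)"
  unfolding L_sum_def by (rule sum_fun_upd_add) (auto simp: L_set_def)

lemma moved_neg_point_right_of_p:
  assumes "0 < K" "L_sum \<kappa> < 0" "finite S" "\<And>\<sigma>. \<sigma> \<in> S \<Longrightarrow> p < \<sigma> - h"
  obtains b where "rate_on_line \<kappa> (c_moved K) b < 0"
    "\<forall>i\<in>{1..s}. 0 < A i * b + B_coef \<alpha> \<beta> (c_moved K) i" "\<And>\<sigma>. \<sigma> \<in> S \<Longrightarrow> b < \<sigma> - h"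
proof -
  have "eventually (\<lambda>t. (rate_on_line \<kappa> (c_moved K) t < 0 \<and> (\<forall>l\<in>{1..s}. 0 < lin_moved K l t))
      \<and> (\<forall>\<sigma>\<in>S. t < \<sigma> - h)) (at_right p)"
    using assms
    by (intro eventually_conj eventually_moved_neg_right_of_p eventually_ball_finite ballI
        order_tendstoD(2)[OF tendsto_ident_at]) auto
  then obtain b where "rate_on_line \<kappa> (c_moved K) b < 0" "\<forall>l\<in>{1..s}. 0 < lin_moved K l b"
    "\<forall>\<sigma>\<in>S. b < \<sigma> - h"
    using eventually_happens'[OF trivial_limit_at_right_real] by blast
  then show ?thesis using that by (simp add: lin_moved_eq)
qed

lemma moved_sign_pattern:
  fixes S :: "real set"
  assumes "finite S" "S \<noteq> {}"
    and feasible: "\<And>\<sigma>. \<sigma> \<in> S \<Longrightarrow> \<forall>i\<in>{1..s}. 0 < A i * \<sigma> + B c i"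
    and root: "\<And>\<sigma>. \<sigma> \<in> S \<Longrightarrow> rate_on_line \<kappa> c \<sigma> = 0"
    and decr: "\<And>\<sigma>. \<sigma> \<in> S \<Longrightarrow> \<exists>\<mu><0. (rate_on_line \<kappa> c has_real_derivative \<mu>) (at \<sigma>)"
  obtains K h where "0 < K" "0 < h"
    "\<And>\<sigma> \<sigma>'. \<sigma> \<in> S \<Longrightarrow> \<sigma>' \<in> S \<Longrightarrow> \<sigma> < \<sigma>' \<Longrightarrow> 2 * h < \<sigma>' - \<sigma>"
    "\<And>\<sigma>. \<sigma> \<in> S \<Longrightarrow> p < \<sigma> - h"
    "\<And>\<sigma>. \<sigma> \<in> S \<Longrightarrow> 0 < rate_on_line \<kappa> (c_moved K) (\<sigma> - h) \<and> rate_on_line \<kappa> (c_moved K) (\<sigma> + h) < 0"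
    "\<And>\<sigma>. \<sigma> \<in> S \<Longrightarrow> \<forall>l\<in>{1..s}. 0 < lin_moved K l (\<sigma> + h)"
proof -
  define K where "K = Max ((\<lambda>\<sigma>. \<bar>\<sigma> - p\<bar>) ` S) + 1"
  have K_bound: "\<bar>\<sigma> - p\<bar> < K" if "\<sigma> \<in> S" for \<sigma>
  proof -
    have "\<bar>\<sigma> - p\<bar> \<le> Max ((\<lambda>\<sigma>. \<bar>\<sigma> - p\<bar>) ` S)" using that \<open>finite S\<close> by (intro Max_ge) auto
    then show ?thesis by (simp add: K_def)
  qed
  then have "0 < K" using \<open>S \<noteq> {}\<close> by force
  have "eventually (\<lambda>h. p < \<sigma> - h \<and> 0 < rate_on_line \<kappa> (c_moved K) (\<sigma> - h)
      \<and> rate_on_line \<kappa> (c_moved K) (\<sigma> + h) < 0 \<and> (\<forall>l\<in>{1..s}. 0 < lin_moved K l (\<sigma> + h)))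
      (at_right 0)"
    if "\<sigma> \<in> S" for \<sigma>
    using decr[OF that]
      eventually_moved_sign_change[OF feasible[OF that] K_bound[OF that] root[OF that]]
    by blast
  then have "eventually (\<lambda>h. \<forall>\<sigma>\<in>S. p < \<sigma> - h \<and> 0 < rate_on_line \<kappa> (c_moved K) (\<sigma> - h)
      \<and> rate_on_line \<kappa> (c_moved K) (\<sigma> + h) < 0 \<and> (\<forall>l\<in>{1..s}. 0 < lin_moved K l (\<sigma> + h)))
      (at_right 0)"
    using \<open>finite S\<close> by (simp add: eventually_ball_finite_distrib)
  moreover note eventually_below_gaps[OF \<open>finite S\<close>] eventually_at_right_less[of 0]
  ultimately have "eventually (\<lambda>h. 0 < h \<and> (\<forall>\<sigma>\<in>S. \<forall>\<sigma>'\<in>S. \<sigma> < \<sigma>' \<longrightarrow> 2 * h < \<sigma>' - \<sigma>)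
      \<and> (\<forall>\<sigma>\<in>S. p < \<sigma> - h \<and> 0 < rate_on_line \<kappa> (c_moved K) (\<sigma> - h)
        \<and> rate_on_line \<kappa> (c_moved K) (\<sigma> + h) < 0 \<and> (\<forall>l\<in>{1..s}. 0 < lin_moved K l (\<sigma> + h))))
      (at_right 0)"
    by eventually_elim blast
  then obtain h where "0 < h" and gaps: "\<forall>\<sigma>\<in>S. \<forall>\<sigma>'\<in>S. \<sigma> < \<sigma>' \<longrightarrow> 2 * h < \<sigma>' - \<sigma>"
    and signs: "\<forall>\<sigma>\<in>S. p < \<sigma> - h \<and> 0 < rate_on_line \<kappa> (c_moved K) (\<sigma> - h)
        \<and> rate_on_line \<kappa> (c_moved K) (\<sigma> + h) < 0 \<and> (\<forall>l\<in>{1..s}. 0 < lin_moved K l (\<sigma> + h))"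
    using eventually_happens'[OF trivial_limit_at_right_real] by blast
  show ?thesis using gaps signs by (intro that[OF \<open>0 < K\<close> \<open>0 < h\<close>]) auto
qed

lemma L_sum_pos:
  fixes S :: "real set"
  assumes cap: "cap_pos s m \<alpha> \<beta> < enat (2 * card S)"
    and \<kappa>_pos: "\<forall>j\<in>{1..m}. 0 < \<kappa> j" and "finite S"
    and feasible: "\<And>\<sigma>. \<sigma> \<in> S \<Longrightarrow> \<forall>i\<in>{1..s}. 0 < A i * \<sigma> + B c i"
    and root: "\<And>\<sigma>. \<sigma> \<in> S \<Longrightarrow> rate_on_line \<kappa> c \<sigma> = 0"
    and decr: "\<And>\<sigma>. \<sigma> \<in> S \<Longrightarrow> \<exists>\<mu><0. (rate_on_line \<kappa> c has_real_derivative \<mu>) (at \<sigma>)"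
  shows "0 < L_sum \<kappa>"
proof (rule ccontr)
  assume "\<not> 0 < L_sum \<kappa>"
  then obtain j0 where j0: "j0 \<in> L" "St 1 j0 < 0" using neg_stoich_in_L \<kappa>_pos by force
  have "S \<noteq> {}" using cap by (auto simp: zero_enat_def[symmetric])
  obtain K h where K: "0 < K" and h: "0 < h"
    "\<And>\<sigma> \<sigma>'. \<sigma> \<in> S \<Longrightarrow> \<sigma>' \<in> S \<Longrightarrow> \<sigma> < \<sigma>' \<Longrightarrow> 2 * h < \<sigma>' - \<sigma>"
    "\<And>\<sigma>. \<sigma> \<in> S \<Longrightarrow> p < \<sigma> - h"
    "\<And>\<sigma>. \<sigma> \<in> S \<Longrightarrow> 0 < rate_on_line \<kappa> (c_moved K) (\<sigma> - h) \<and> rate_on_line \<kappa> (c_moved K) (\<sigma> + h) < 0"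
    "\<And>\<sigma>. \<sigma> \<in> S \<Longrightarrow> \<forall>l\<in>{1..s}. 0 < lin_moved K l (\<sigma> + h)"
    using moved_sign_pattern[OF \<open>finite S\<close> \<open>S \<noteq> {}\<close> feasible root decr] by blast
  have j0_m: "j0 \<in> {1..m}" using j0 by (simp add: L_set_def)
  obtain \<epsilon> where "0 < \<epsilon>" and sign': "\<And>\<sigma>. \<sigma> \<in> S \<Longrightarrow>
      0 < rate_on_line (\<kappa>(j0 := \<kappa> j0 + \<epsilon>)) (c_moved K) (\<sigma> - h)
      \<and> rate_on_line (\<kappa>(j0 := \<kappa> j0 + \<epsilon>)) (c_moved K) (\<sigma> + h) < 0"
    using rate_increase_keeps_sign_changes[OF \<open>finite S\<close> j0_m h(4)] by blast
  define \<kappa>' where "\<kappa>' = \<kappa>(j0 := \<kappa> j0 + \<epsilon>)"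
  have \<kappa>'_pos: "\<forall>j\<in>{1..m}. 0 < \<kappa>' j"
  proof
    fix j assume "j \<in> {1..m}"
    then have "0 < \<kappa> j" using \<kappa>_pos by blast
    then show "0 < \<kappa>' j" using \<open>0 < \<epsilon>\<close> by (auto simp: \<kappa>'_def)
  qed
  have "L_sum \<kappa>' < 0"
    using \<open>\<not> 0 < L_sum \<kappa>\<close> \<open>0 < \<epsilon>\<close> j0 weight_pos[of j0]
    by (simp add: \<kappa>'_def L_sum_increase_rate mult_pos_neg mult_neg_pos add_nonpos_neg)
  then obtain b where b: "rate_on_line \<kappa>' (c_moved K) b < 0"
    "\<forall>i\<in>{1..s}. 0 < A i * b + B_coef \<alpha> \<beta> (c_moved K) i" "\<And>\<sigma>. \<sigma> \<in> S \<Longrightarrow> b < \<sigma> - h"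
    using moved_neg_point_right_of_p[OF K _ \<open>finite S\<close> h(3)] by blast
  have "enat (2 * card S) \<le> ecard (pos_steady_states s m \<alpha> \<beta> \<kappa>' (c_moved K))"
    using \<open>finite S\<close> \<open>S \<noteq> {}\<close> h(1,2) b sign' h(5)
    by (intro many_pos_steady_states) (auto simp: \<kappa>'_def lin_moved_eq)
  also have "\<dots> \<le> cap_pos s m \<alpha> \<beta>" by (rule ecard_le_cap_pos[OF \<kappa>'_pos])
  finally show False using cap by simp
qed

end

theorem lemma7p6:
  fixes s m N :: nat and \<alpha> \<beta> :: "nat \<Rightarrow> nat \<Rightarrow> nat"
    and \<kappa>s cs :: "nat \<Rightarrow> real" and R :: "nat set" and \<tau> :: nat
  assumes G: "valid_network s m \<alpha> \<beta>"
    and onedim: "one_dim_S s m \<alpha> \<beta>"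
    and lab1: "\<beta> 1 1 \<noteq> \<alpha> 1 1"
    and cap: "cap_pos s m \<alpha> \<beta> = enat (2 * N + 1)"
    and kpos: "\<forall>j\<in>{1..m}. 0 < \<kappa>s j"
    and fin: "finite (pos_steady_states s m \<alpha> \<beta> \<kappa>s cs)"
    and card: "card (pos_steady_states s m \<alpha> \<beta> \<kappa>s cs) = 2 * N + 1"
    and stab: "\<exists>T \<subseteq> pos_steady_states s m \<alpha> \<beta> \<kappa>s cs. card T = N + 1 \<and>
                 (\<forall>x\<in>T. stable s m \<alpha> \<beta> \<kappa>s x)"
    and reps: "class_reps s \<alpha> \<beta> cs R"
    and std: "1 \<in> H_set s m \<alpha> \<beta> cs R"
    and tauH: "\<tau> \<in> H_set s m \<alpha> \<beta> cs R"
    and tauA: "A_coef \<alpha> \<beta> \<tau> > 0"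
    and tauI: "- B_coef \<alpha> \<beta> cs \<tau> / A_coef \<alpha> \<beta> \<tau> = Inf (I_set s m \<alpha> \<beta> cs R)"
  shows "(\<Sum>j\<in>L_set s m \<alpha> \<beta> cs \<tau>.
           stoich \<alpha> \<beta> 1 j * \<kappa>s j
           * (\<Prod>i\<in>J_set s \<alpha> \<beta>. \<bar>A_coef \<alpha> \<beta> i\<bar> ^ \<alpha> i j)
           * (\<Prod>i\<in>{1..s} - J_set s \<alpha> \<beta>. B_coef \<alpha> \<beta> cs i ^ \<alpha> i j)
           * (\<Prod>k\<in>H_set s m \<alpha> \<beta> cs R - {\<tau>}.
                (B_coef \<alpha> \<beta> cs k / \<bar>A_coef \<alpha> \<beta> k\<bar>
                 - A_coef \<alpha> \<beta> k / \<bar>A_coef \<alpha> \<beta> k\<bar> * (B_coef \<alpha> \<beta> cs \<tau> / A_coef \<alpha> \<beta> \<tau>))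
                ^ gamma s m \<alpha> \<beta> cs k j)) > 0"
proof -
  interpret one_dim_network s m \<alpha> \<beta> using G onedim lab1 by unfold_locales
  obtain T where T: "T \<subseteq> pos_steady_states s m \<alpha> \<beta> \<kappa>s cs" "card T = N + 1"
    "\<forall>x\<in>T. stable s m \<alpha> \<beta> \<kappa>s x" using stab by blast
  define S where "S = (\<lambda>x. x 1) ` T"
  have card_S: "card S = N + 1"
    unfolding S_def using card_image[OF inj_on_subset[OF inj_on_first_coordinate T(1)]] T(2) by simp
  have "T \<noteq> {}" using T(2) by auto
  then obtain x0 where "x0 \<in> T" by blast
  interpret class_structure s m \<alpha> \<beta> cs R \<tau> "x0 1"
    using reps std tauH tauA tauI pos_steady_state_on_line(1) T(1) \<open>x0 \<in> T\<close> by unfold_locales auto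
  have "0 < L_sum \<kappa>s"
  proof (rule L_sum_pos[OF _ kpos])
    show "cap_pos s m \<alpha> \<beta> < enat (2 * card S)" using cap card_S by simp
    show "finite S" using card_S card.infinite by force
  qed (use T pos_steady_state_on_line stable_steady_state_decreasing in \<open>auto simp: S_def\<close>)
  then show ?thesis
    unfolding L_sum_def weight_def E_def by (simp add: mult.assoc)
qed

end
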